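(* For any $A\subseteq\mathbb{N}$ there exists an irreflexive interpolable relation $\prec_A$ on $\mathbb{N}$ such that for any $X\subseteq\mathbb{N}$: $A\leq_T X'$ if and only if there exists an $X$-computable relation on $\mathbb{N}$ isomorphic to $\prec_A$.
   Context: A relation $\prec$ is irreflexive if $x\prec x$ fails for all $x$. A transitive relation $\prec$ on $\mathbb{N}$ is interpolable if each initial segment $\{x\mid x\prec y\}$ is directed (non-empty, and any two of its elements have a $\prec$-upper bound in it). $X'$ denotes the Turing jump of $X$. *)

theory Defs
  imports Main "HOL-Library.Nat_Bijection"
begin

text \<open>Unary partial recursive functions on nat (tuples coded via the Cantor pairing
  prod_encode), with an oracle call.  This is a standard Kleene-style basis.\<close>

datatype recf =
    Z | S | Id | Fst | Snd | Orc
  | Comp recf recf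
  | Pair recf recf
  | PrimRec recf recf
  | Mu recf

inductive eval :: "nat set \<Rightarrow> recf \<Rightarrow> nat \<Rightarrow> nat \<Rightarrow> bool" for X :: "nat set" where
  eval_Z: "eval X Z x 0"
| eval_S: "eval X S x (Suc x)"
| eval_Id: "eval X Id x x"
| eval_Fst: "eval X Fst x (fst (prod_decode x))"
| eval_Snd: "eval X Snd x (snd (prod_decode x))"
| eval_Orc: "eval X Orc x (if x \<in> X then 1 else 0)"
| eval_Comp: "eval X g x y \<Longrightarrow> eval X f y z \<Longrightarrow> eval X (Comp f g) x z"
| eval_Pair: "eval X f x y \<Longrightarrow> eval X g x z \<Longrightarrow> eval X (Pair f g) x (prod_encode (y, z))"
| eval_PrimRec0: "eval X f a y \<Longrightarrow> eval X (PrimRec f g) (prod_encode (a, 0)) y"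
| eval_PrimRecS: "eval X (PrimRec f g) (prod_encode (a, n)) y \<Longrightarrow>
     eval X g (prod_encode (a, prod_encode (n, y))) z \<Longrightarrow>
     eval X (PrimRec f g) (prod_encode (a, Suc n)) z"
| eval_Mu: "eval X f (prod_encode (a, n)) 0 \<Longrightarrow>
     (\<forall>m<n. \<exists>v. v \<noteq> 0 \<and> eval X f (prod_encode (a, m)) v) \<Longrightarrow>
     eval X (Mu f) a n"

fun code :: "recf \<Rightarrow> nat" where
  "code Z = prod_encode (0, 0)"
| "code S = prod_encode (1, 0)"
| "code Id = prod_encode (2, 0)"
| "code Fst = prod_encode (3, 0)"
| "code Snd = prod_encode (4, 0)"
| "code Orc = prod_encode (5, 0)"
| "code (Comp f g) = prod_encode (6, prod_encode (code f, code g))"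
| "code (Pair f g) = prod_encode (7, prod_encode (code f, code g))"
| "code (PrimRec f g) = prod_encode (8, prod_encode (code f, code g))"
| "code (Mu f) = prod_encode (9, code f)"

definition jump :: "nat set \<Rightarrow> nat set" where
  "jump X = {e. \<exists>p y. code p = e \<and> eval X p e y}"

definition turing_reducible :: "nat set \<Rightarrow> nat set \<Rightarrow> bool" where
  "turing_reducible A Y \<longleftrightarrow> (\<exists>p. \<forall>x. eval Y p x (if x \<in> A then 1 else 0))"

definition rel_computable_in :: "nat set \<Rightarrow> (nat \<Rightarrow> nat \<Rightarrow> bool) \<Rightarrow> bool" where
  "rel_computable_in X R \<longleftrightarrow>
     (\<exists>p. \<forall>x y. eval X p (prod_encode (x, y)) (if R x y then 1 else 0))"

definition rel_isomorphic :: "(nat \<Rightarrow> nat \<Rightarrow> bool) \<Rightarrow> (nat \<Rightarrow> nat \<Rightarrow> bool) \<Rightarrow> bool" where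
  "rel_isomorphic R Q \<longleftrightarrow> (\<exists>f. bij f \<and> (\<forall>x y. R x y \<longleftrightarrow> Q (f x) (f y)))"

definition irreflexive_rel :: "(nat \<Rightarrow> nat \<Rightarrow> bool) \<Rightarrow> bool" where
  "irreflexive_rel R \<longleftrightarrow> (\<forall>x. \<not> R x x)"

definition transitive_rel :: "(nat \<Rightarrow> nat \<Rightarrow> bool) \<Rightarrow> bool" where
  "transitive_rel R \<longleftrightarrow> (\<forall>x y z. R x y \<longrightarrow> R y z \<longrightarrow> R x z)"

text \<open>Interpolable: transitive, and each initial segment {x. x < y} is directed:
  non-empty, and any two of its elements have an R-upper bound inside it.\<close>

definition interpolable :: "(nat \<Rightarrow> nat \<Rightarrow> bool) \<Rightarrow> bool" where
  "interpolable R \<longleftrightarrow> transitive_rel R \<and>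
     (\<forall>y. (\<exists>x. R x y) \<and>
          (\<forall>x z. R x y \<longrightarrow> R z y \<longrightarrow> (\<exists>w. R w y \<and> R x w \<and> R z w)))"

end

theory Submission
  imports Defs Complex_Main
begin

text \<open>In component \<open>c\<close> the order consists of \<open>c + 2\<close> incomparable chains lying below a line of
  dense blocks; the blocks above the middle are indexed by the stages \<open>s\<close> at which an approximation
  \<open>F c s\<close> holds, so the line has a maximal point iff \<open>F c s\<close> is eventually false.  Up to
  isomorphism the order depends only on the limits \<open>lim\<^sub>s F c s\<close>, and a maximal point whose
  initial segment has width exactly \<open>L + 2\<close> exists iff \<open>lim\<^sub>s F L s\<close> is false.  Component \<open>2n\<close>
  codes \<open>n \<in> A\<close> and component \<open>2n + 1\<close> codes \<open>n \<notin> A\<close>.  If \<open>A \<le>\<^sub>T X'\<close>, the limit lemma turns an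
  \<open>X'\<close>-computation into \<open>X\<close>-computable approximations and hence an \<open>X\<close>-computable copy.  Conversely,
  in an \<open>X\<close>-computable copy both \<open>A\<close> and its complement are \<open>\<Sigma>\<^sub>2\<close> in \<open>X\<close>, hence \<open>A \<le>\<^sub>T X'\<close>.

  The limit lemma is proved via derivations, finite lists of facts about computations that are
  checked step by step: the jump is approximated at stage \<open>s\<close> by the indices with a derivation
  coded below \<open>s\<close>, and these approximations agree with \<open>X'\<close> on any finite part from some stage on.\<close>

inductive_cases eval_ZE: "eval X Z x y"
inductive_cases eval_SE: "eval X S x y"
inductive_cases eval_IdE: "eval X recf.Id x y"
inductive_cases eval_FstE: "eval X Fst x y"
inductive_cases eval_SndE: "eval X Snd x y"
inductive_cases eval_OrcE: "eval X Orc x y"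
inductive_cases eval_CompE: "eval X (Comp f g) x y"
inductive_cases eval_PairE: "eval X (recf.Pair f g) x y"
inductive_cases eval_PrimRecE: "eval X (PrimRec f g) x y"
inductive_cases eval_MuE: "eval X (Mu f) x y"

lemma eval_deterministic: "eval X p x y \<Longrightarrow> eval X p x y' \<Longrightarrow> y = y'"
proof (induction arbitrary: y' rule: eval.induct)
  case eval_Comp
  then show ?case by (metis eval_CompE)
next
  case eval_Pair
  then show ?case by (metis eval_PairE)
next
  case (eval_PrimRec0 f a y g)
  from eval_PrimRec0.prems show ?case
    by (rule eval_PrimRecE) (simp_all add: prod_encode_eq eval_PrimRec0.IH)
next
  case (eval_PrimRecS f g a n y z)
  from eval_PrimRecS.prems show ?case
    by (rule eval_PrimRecE) (auto simp: prod_encode_eq dest: eval_PrimRecS.IH)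
next
  case (eval_Mu f a n)
  from eval_Mu.prems have "eval X f (prod_encode (a, y')) 0"
    and "\<forall>m<y'. \<exists>v. v \<noteq> 0 \<and> eval X f (prod_encode (a, m)) v"
    by (auto elim: eval_MuE)
  with eval_Mu.IH show ?case by (metis linorder_neqE_nat)
qed (auto elim: eval_ZE eval_SE eval_IdE eval_FstE eval_SndE eval_OrcE)

lemma inj_code: "inj code"
proof (rule injI)
  show "code p = code q \<Longrightarrow> p = q" for p q
    by (induction p arbitrary: q; case_tac q) (auto simp: prod_encode_eq)
qed

lemmas code_eq_iff = inj_eq[OF inj_code]


section \<open>Computable functions and decidable predicates\<close>

definition computable :: "nat set \<Rightarrow> (nat \<Rightarrow> nat) \<Rightarrow> bool" where
  "computable X f \<longleftrightarrow> (\<exists>p. \<forall>x. eval X p x (f x))"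

definition decidable :: "nat set \<Rightarrow> (nat \<Rightarrow> bool) \<Rightarrow> bool" where
  "decidable X P \<longleftrightarrow> computable X (\<lambda>x. if P x then 1 else 0)"

fun const_prog :: "nat \<Rightarrow> recf" where
  "const_prog 0 = Z"
| "const_prog (Suc k) = Comp S (const_prog k)"

lemma eval_const_prog: "eval X (const_prog k) x k"
  by (induction k) (auto intro: eval.intros)

lemma computable_const: "computable X (\<lambda>x. c)"
  unfolding computable_def using eval_const_prog by blast

lemma computable_id: "computable X (\<lambda>x. x)"
  unfolding computable_def using eval_Id by blast

lemma computable_comp: "computable X f \<Longrightarrow> computable X g \<Longrightarrow> computable X (\<lambda>x. f (g x))"
  unfolding computable_def by (blast intro: eval_Comp)

lemma computable_fst: "computable X f \<Longrightarrow> computable X (\<lambda>x. fst (prod_decode (f x)))"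
  unfolding computable_def by (blast intro: eval_Comp eval_Fst)

lemma computable_snd: "computable X f \<Longrightarrow> computable X (\<lambda>x. snd (prod_decode (f x)))"
  unfolding computable_def by (blast intro: eval_Comp eval_Snd)

lemma computable_Suc: "computable X f \<Longrightarrow> computable X (\<lambda>x. Suc (f x))"
  unfolding computable_def by (blast intro: eval_Comp eval_S)

lemma computable_pair:
  "computable X f \<Longrightarrow> computable X g \<Longrightarrow> computable X (\<lambda>x. prod_encode (f x, g x))"
  unfolding computable_def by (blast intro: eval_Pair)

lemma decidable_oracle: "computable X f \<Longrightarrow> decidable X (\<lambda>x. f x \<in> X)"
  unfolding decidable_def computable_def by (blast intro: eval_Comp eval_Orc)

lemma computable_app2:
  assumes "computable X (\<lambda>z. h (fst (prod_decode z)) (snd (prod_decode z)))"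
    and "computable X f" and "computable X g"
  shows "computable X (\<lambda>x. h (f x) (g x))"
  using computable_comp[OF assms(1) computable_pair[OF assms(2,3)]] by simp

lemma decidable_app2:
  assumes "decidable X (\<lambda>z. P (fst (prod_decode z)) (snd (prod_decode z)))"
    and "computable X f" and "computable X g"
  shows "decidable X (\<lambda>x. P (f x) (g x))"
  using assms unfolding decidable_def by (rule computable_app2[where h="\<lambda>a b. if P a b then 1 else 0"])

lemma decidable_comp: "decidable X P \<Longrightarrow> computable X f \<Longrightarrow> decidable X (\<lambda>x. P (f x))"
  unfolding decidable_def by (rule computable_comp[where f="\<lambda>x. if P x then 1 else 0"])

lemma computable_rec_nat_uncurried:
  assumes "computable X F"
    and "computable X (\<lambda>z. G (fst (prod_decode z)) (fst (prod_decode (snd (prod_decode z))))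
                  (snd (prod_decode (snd (prod_decode z)))))"
  shows "computable X (\<lambda>z. rec_nat (F (fst (prod_decode z))) (G (fst (prod_decode z))) (snd (prod_decode z)))"
proof -
  from assms obtain pf pg where pf: "\<And>x. eval X pf x (F x)"
    and pg: "\<And>x. eval X pg x (G (fst (prod_decode x)) (fst (prod_decode (snd (prod_decode x))))
                  (snd (prod_decode (snd (prod_decode x)))))"
    unfolding computable_def by blast
  have "eval X (PrimRec pf pg) (prod_encode (a, n)) (rec_nat (F a) (G a) n)" for a n
  proof (induction n)
    case 0
    then show ?case using pf by (auto intro: eval_PrimRec0)
  next
    case (Suc n)
    show ?case
      using eval_PrimRecS[OF Suc pg[of "prod_encode (a, prod_encode (n, rec_nat (F a) (G a) n))"]]
      by simp
  qed
  then have "eval X (PrimRec pf pg) z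
      (rec_nat (F (fst (prod_decode z))) (G (fst (prod_decode z))) (snd (prod_decode z)))" for z
    by (metis prod.collapse prod_decode_inverse)
  then show ?thesis unfolding computable_def by blast
qed

lemma computable_rec_nat:
  assumes "computable X F"
    and "computable X (\<lambda>z. G (fst (prod_decode z)) (fst (prod_decode (snd (prod_decode z))))
                  (snd (prod_decode (snd (prod_decode z)))))"
    and "computable X a" and "computable X m"
  shows "computable X (\<lambda>x. rec_nat (F (a x)) (G (a x)) (m x))"
  using computable_app2[OF computable_rec_nat_uncurried[OF assms(1,2)] assms(3,4)] by simp

lemmas computable_basic_intros =
  computable_const computable_id computable_fst computable_snd computable_Suc computable_pair

lemma computable_add: "computable X f \<Longrightarrow> computable X g \<Longrightarrow> computable X (\<lambda>x. f x + g x)"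
proof -
  assume f: "computable X f" and g: "computable X g"
  have "computable X (\<lambda>x. rec_nat (f x) (\<lambda>n r. Suc r) (g x))"
    by (rule computable_rec_nat[where F="\<lambda>a. a" and G="\<lambda>a n r. Suc r"])
      (intro f g computable_basic_intros)+
  moreover have "rec_nat a (\<lambda>n r. Suc r) b = a + b" for a b :: nat
    by (induction b) auto
  ultimately show ?thesis by simp
qed

lemma computable_mult: "computable X f \<Longrightarrow> computable X g \<Longrightarrow> computable X (\<lambda>x. f x * g x)"
proof -
  assume f: "computable X f" and g: "computable X g"
  have "computable X (\<lambda>x. rec_nat 0 (\<lambda>n r. r + f x) (g x))"
    by (rule computable_rec_nat[where F="\<lambda>a. 0" and G="\<lambda>a n r. r + a"])
      (intro f g computable_add computable_basic_intros)+
  moreover have "rec_nat 0 (\<lambda>n r. r + a) b = a * b" for a b :: nat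
    by (induction b) auto
  ultimately show ?thesis by simp
qed

lemma computable_pred: "computable X f \<Longrightarrow> computable X (\<lambda>x. f x - 1)"
proof -
  assume f: "computable X f"
  have "computable X (\<lambda>x. rec_nat 0 (\<lambda>n r. n) (f x))"
    by (rule computable_rec_nat[where F="\<lambda>a. 0" and G="\<lambda>a n r. n" and a=f])
      (intro f computable_basic_intros)+
  moreover have "rec_nat 0 (\<lambda>n r. n) b = b - 1" for b :: nat
    by (cases b) auto
  ultimately show ?thesis by simp
qed

lemma computable_diff: "computable X f \<Longrightarrow> computable X g \<Longrightarrow> computable X (\<lambda>x. f x - g x)"
proof -
  assume f: "computable X f" and g: "computable X g"
  have "computable X (\<lambda>x. rec_nat (f x) (\<lambda>n r. r - 1) (g x))"
    by (rule computable_rec_nat[where F="\<lambda>a. a" and G="\<lambda>a n r. r - 1"])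
      (intro f g computable_pred computable_basic_intros)+
  moreover have "rec_nat a (\<lambda>n r. r - 1) b = a - b" for a b :: nat
    by (induction b) auto
  ultimately show ?thesis by simp
qed

lemma computable_power: "computable X f \<Longrightarrow> computable X g \<Longrightarrow> computable X (\<lambda>x. f x ^ g x)"
proof -
  assume f: "computable X f" and g: "computable X g"
  have "computable X (\<lambda>x. rec_nat 1 (\<lambda>n r. r * f x) (g x))"
    by (rule computable_rec_nat[where F="\<lambda>a. 1" and G="\<lambda>a n r. r * a"])
      (intro f g computable_mult computable_basic_intros)+
  moreover have "rec_nat 1 (\<lambda>n r. r * a) b = a ^ b" for a b :: nat
    by (induction b) auto
  ultimately show ?thesis by simp
qed

lemma computable_mod2: "computable X f \<Longrightarrow> computable X (\<lambda>x. f x mod 2)"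
proof -
  assume f: "computable X f"
  have "computable X (\<lambda>x. rec_nat 0 (\<lambda>n r. 1 - r) (f x))"
    by (rule computable_rec_nat[where F="\<lambda>a. 0" and G="\<lambda>a n r. 1 - r" and a=f])
      (intro f computable_diff computable_basic_intros)+
  moreover have "rec_nat 0 (\<lambda>n r. 1 - r) b = b mod 2" for b :: nat
    by (induction b) (auto simp: mod_Suc)
  ultimately show ?thesis by simp
qed

lemma computable_div2: "computable X f \<Longrightarrow> computable X (\<lambda>x. f x div 2)"
proof -
  assume f: "computable X f"
  have "computable X (\<lambda>x. rec_nat 0 (\<lambda>n r. r + n mod 2) (f x))"
    by (rule computable_rec_nat[where F="\<lambda>a. 0" and G="\<lambda>a n r. r + n mod 2" and a=f])
      (intro f computable_add computable_mod2 computable_basic_intros)+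
  moreover have "rec_nat 0 (\<lambda>n r. r + n mod 2) b = b div 2" for b :: nat
    by (induction b) (simp_all, presburger)
  ultimately show ?thesis by simp
qed

lemma decidable_less: "computable X f \<Longrightarrow> computable X g \<Longrightarrow> decidable X (\<lambda>x. f x < g x)"
proof -
  assume "computable X f" "computable X g"
  then have "computable X (\<lambda>x. 1 - (1 - (g x - f x)))"
    by (intro computable_diff computable_const)
  moreover have "1 - (1 - (b - a)) = (if a < b then 1 else (0::nat))" for a b :: nat
    by auto
  ultimately show ?thesis unfolding decidable_def by simp
qed

lemma decidable_not: "decidable X P \<Longrightarrow> decidable X (\<lambda>x. \<not> P x)"
proof -
  assume "decidable X P"
  then have "computable X (\<lambda>x. 1 - (if P x then 1 else 0))"
    unfolding decidable_def by (intro computable_diff computable_const)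
  moreover have "(1::nat) - (if b then 1 else 0) = (if \<not> b then 1 else 0)" for b
    by auto
  ultimately show ?thesis unfolding decidable_def by simp
qed

lemma decidable_conj: "decidable X P \<Longrightarrow> decidable X Q \<Longrightarrow> decidable X (\<lambda>x. P x \<and> Q x)"
proof -
  assume "decidable X P" "decidable X Q"
  then have "computable X (\<lambda>x. (if P x then 1 else 0) * (if Q x then 1 else 0))"
    unfolding decidable_def by (intro computable_mult)
  moreover have "(if a then 1 else 0) * (if b then 1 else 0) = (if a \<and> b then 1 else (0::nat))" for a b
    by auto
  ultimately show ?thesis unfolding decidable_def by simp
qed

lemma decidable_disj: "decidable X P \<Longrightarrow> decidable X Q \<Longrightarrow> decidable X (\<lambda>x. P x \<or> Q x)"
  using decidable_not[of X "\<lambda>x. \<not> P x \<and> \<not> Q x"] decidable_conj[OF decidable_not decidable_not]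
  by simp

lemma decidable_imp: "decidable X P \<Longrightarrow> decidable X Q \<Longrightarrow> decidable X (\<lambda>x. P x \<longrightarrow> Q x)"
  using decidable_disj[OF decidable_not, of X P Q] by simp

lemma decidable_le: "computable X f \<Longrightarrow> computable X g \<Longrightarrow> decidable X (\<lambda>x. f x \<le> g x)"
  using decidable_not[OF decidable_less, of X g f] by (simp add: not_less)

lemma decidable_eq: "computable X f \<Longrightarrow> computable X g \<Longrightarrow> decidable X (\<lambda>x. f x = g x)"
  using decidable_conj[OF decidable_le decidable_le, of X f g g f] by (simp add: eq_iff)

lemma decidable_neq: "computable X f \<Longrightarrow> computable X g \<Longrightarrow> decidable X (\<lambda>x. f x \<noteq> g x)"
  by (intro decidable_not decidable_eq)

lemma computable_If:
  "decidable X P \<Longrightarrow> computable X f \<Longrightarrow> computable X g \<Longrightarrow> computable X (\<lambda>x. if P x then f x else g x)"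
proof -
  assume "decidable X P" "computable X f" "computable X g"
  then have "computable X (\<lambda>x. (if P x then 1 else 0) * f x + (1 - (if P x then 1 else 0)) * g x)"
    unfolding decidable_def by (intro computable_add computable_mult computable_diff computable_const)
  moreover have "(if b then 1 else 0) * a + (1 - (if b then 1 else 0)) * c = (if b then a else c)"
    for b and a c :: nat
    by simp
  ultimately show ?thesis by simp
qed

lemma decidable_If:
  "decidable X P \<Longrightarrow> decidable X Q \<Longrightarrow> decidable X R \<Longrightarrow> decidable X (\<lambda>x. if P x then Q x else R x)"
  using decidable_disj[OF decidable_conj decidable_conj[OF decidable_not], of X P Q P R]
  by (simp add: if_bool_eq_disj)

lemmas computable_intros = computable_basic_intros computable_add computable_mult computable_diff
  computable_power computable_mod2 computable_div2 computable_If
  decidable_less decidable_le decidable_eq decidable_neq decidable_not decidable_conj decidable_disj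
  decidable_imp decidable_If

lemma eval_Mu_Least:
  assumes p: "\<And>m. eval X p (prod_encode (a, m)) (if Q m then 0 else 1)" and "\<exists>n. Q n"
  shows "eval X (Mu p) a (LEAST n. Q n)"
proof (rule eval_Mu)
  show "eval X p (prod_encode (a, LEAST n. Q n)) 0"
    using p[of "LEAST n. Q n"] LeastI_ex[OF assms(2)] by simp
  show "\<forall>m<(LEAST n. Q n). \<exists>v. v \<noteq> 0 \<and> eval X p (prod_encode (a, m)) v"
    using p not_less_Least by (metis zero_neq_one)
qed

lemma computable_Least:
  assumes "decidable X (\<lambda>z. P (fst (prod_decode z)) (snd (prod_decode z)))"
    and "\<And>a. \<exists>n. P a n"
  shows "computable X (\<lambda>a. LEAST n. P a n)"
proof -
  have "computable X (\<lambda>z. if P (fst (prod_decode z)) (snd (prod_decode z)) then 0 else 1)"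
    by (intro computable_If assms(1) computable_const)
  then obtain p where p: "\<And>z. eval X p z (if P (fst (prod_decode z)) (snd (prod_decode z)) then 0 else 1)"
    unfolding computable_def by blast
  have "eval X (Mu p) a (LEAST n. P a n)" for a
  proof (rule eval_Mu_Least)
    show "eval X p (prod_encode (a, m)) (if P a m then 0 else 1)" for m
      using p[of "prod_encode (a, m)"] by simp
  qed (rule assms(2))
  then show ?thesis unfolding computable_def by blast
qed

lemma decidable_all_less:
  assumes "decidable X (\<lambda>z. P (fst (prod_decode z)) (snd (prod_decode z)))" and "computable X m"
  shows "decidable X (\<lambda>x. \<forall>i<m x. P x i)"
proof -
  have "computable X (\<lambda>x. rec_nat 1 (\<lambda>n r. r * (if P x n then 1 else 0)) (m x))"
    by (rule computable_rec_nat[where F="\<lambda>a. 1" and G="\<lambda>a n r. r * (if P a n then 1 else 0)"])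
      (intro assms computable_intros decidable_app2[OF assms(1)])+
  moreover have "rec_nat 1 (\<lambda>n r. r * (if P a n then 1 else 0)) k = (if \<forall>i<k. P a i then 1 else (0::nat))"
    for a k
    by (induction k) (auto simp: less_Suc_eq)
  ultimately show ?thesis unfolding decidable_def by simp
qed

lemma decidable_ex_less:
  assumes "decidable X (\<lambda>z. P (fst (prod_decode z)) (snd (prod_decode z)))" and "computable X m"
  shows "decidable X (\<lambda>x. \<exists>i<m x. P x i)"
  using decidable_not[OF decidable_all_less[OF decidable_not[OF assms(1)] assms(2)]] by simp

lemma computable_funpow:
  assumes "computable X f" "computable X a" "computable X i"
  shows "computable X (\<lambda>x. (f ^^ i x) (a x))"
proof -
  have "computable X (\<lambda>x. rec_nat (a x) (\<lambda>n r. f r) (i x))"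
    by (rule computable_rec_nat[where F="\<lambda>a. a" and G="\<lambda>a n r. f r"])
      (intro assms computable_comp[OF assms(1)] computable_intros)+
  moreover have "rec_nat b (\<lambda>n r. f r) k = (f ^^ k) b" for b k
    by (induction k) auto
  ultimately show ?thesis by simp
qed

definition bounded_least :: "(nat \<Rightarrow> bool) \<Rightarrow> nat \<Rightarrow> nat" where
  "bounded_least P m = (if \<exists>i<m. P i then (LEAST i. P i) else m)"

lemma bounded_leastI:
  "\<exists>i<m. P i \<Longrightarrow> bounded_least P m < m \<and> P (bounded_least P m) \<and> (\<forall>j<bounded_least P m. \<not> P j)"
  unfolding bounded_least_def
  by (auto intro: LeastI dest: not_less_Least) (meson LeastI_ex Least_le le_less_trans)

lemma bounded_least_Suc:
  "bounded_least P (Suc m) =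
     (if bounded_least P m < m then bounded_least P m else if P m then m else Suc m)"
  unfolding bounded_least_def
  by (auto simp: less_Suc_eq intro!: Least_equality dest: not_less_Least)
    (meson LeastI_ex Least_le le_less_trans not_less)+

lemma computable_bounded_least:
  assumes "decidable X (\<lambda>z. P (fst (prod_decode z)) (snd (prod_decode z)))" and "computable X m"
  shows "computable X (\<lambda>x. bounded_least (P x) (m x))"
proof -
  have "computable X (\<lambda>x. rec_nat 0 (\<lambda>n r. if r < n then r else if P x n then n else Suc n) (m x))"
    by (rule computable_rec_nat[where F="\<lambda>a. 0"
          and G="\<lambda>a n r. if r < n then r else if P a n then n else Suc n"])
      (intro assms decidable_app2[OF assms(1)] computable_intros)+
  moreover have "rec_nat 0 (\<lambda>n r. if r < n then r else if P a n then n else Suc n) k = bounded_least (P a) k"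
    for a k
    by (induction k) (simp_all add: bounded_least_Suc, simp add: bounded_least_def)
  ultimately show ?thesis by simp
qed

section \<open>Lists coded as numbers\<close>

definition tl_num :: "nat \<Rightarrow> nat" where
  "tl_num c = (if c = 0 then 0 else snd (prod_decode (c - 1)))"

definition hd_num :: "nat \<Rightarrow> nat" where
  "hd_num c = fst (prod_decode (c - 1))"

definition nth_num :: "nat \<Rightarrow> nat \<Rightarrow> nat" where
  "nth_num c j = hd_num ((tl_num ^^ j) c)"

lemma computable_tl_num: "computable X f \<Longrightarrow> computable X (\<lambda>x. tl_num (f x))"
  unfolding tl_num_def by (intro computable_intros computable_pred)

lemma computable_hd_num: "computable X f \<Longrightarrow> computable X (\<lambda>x. hd_num (f x))"
  unfolding hd_num_def by (intro computable_intros computable_pred)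

lemma computable_funpow_tl_num:
  "computable X f \<Longrightarrow> computable X g \<Longrightarrow> computable X (\<lambda>x. (tl_num ^^ g x) (f x))"
  by (intro computable_funpow computable_tl_num[OF computable_id])

lemma computable_nth_num:
  "computable X f \<Longrightarrow> computable X g \<Longrightarrow> computable X (\<lambda>x. nth_num (f x) (g x))"
  unfolding nth_num_def by (intro computable_hd_num computable_funpow_tl_num)

lemma fst_prod_decode_le: "fst (prod_decode n) \<le> n"
  by (metis le_prod_encode_1 prod.collapse prod_decode_inverse)

lemma snd_prod_decode_le: "snd (prod_decode n) \<le> n"
  by (metis le_prod_encode_2 prod.collapse prod_decode_inverse)

lemma list_decode_Suc_eq: "list_decode (Suc n) = fst (prod_decode n) # list_decode (snd (prod_decode n))"
  by (simp split: prod.split)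

declare list_decode.simps(2)[simp del] list_decode_Suc_eq[simp]

lemma list_decode_eq_Nil_iff: "list_decode c = [] \<longleftrightarrow> c = 0"
  by (cases c) simp_all

lemma list_decode_funpow_tl_num: "list_decode ((tl_num ^^ i) c) = drop i (list_decode c)"
proof -
  have "list_decode (tl_num c) = tl (list_decode c)" for c
    by (cases c) (simp_all add: tl_num_def)
  then show ?thesis by (induction i) (simp_all add: drop_Suc tl_drop)
qed

lemma list_decode_le: "length (list_decode c) \<le> c \<and> (\<forall>v\<in>set (list_decode c). v < c)"
proof (induction c rule: list_decode.induct)
  case (2 n)
  then have "length (list_decode (snd (prod_decode n))) \<le> snd (prod_decode n)"
    and "\<forall>v\<in>set (list_decode (snd (prod_decode n))). v < snd (prod_decode n)"
    by (simp_all add: prod_eq_iff)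
  then show ?case
    using fst_prod_decode_le[of n] snd_prod_decode_le[of n] by auto
qed simp

lemma less_length_list_decode: "i < length (list_decode c) \<longleftrightarrow> (tl_num ^^ i) c \<noteq> 0"
proof -
  have "(tl_num ^^ i) c \<noteq> 0 \<longleftrightarrow> drop i (list_decode c) \<noteq> []"
    using list_decode_eq_Nil_iff[of "(tl_num ^^ i) c"] by (simp add: list_decode_funpow_tl_num)
  then show ?thesis by (simp add: not_le)
qed

lemma less_length_list_decode_iff: "i < length (list_decode c) \<longleftrightarrow> i < c \<and> (tl_num ^^ i) c \<noteq> 0"
  using less_length_list_decode[of i c] list_decode_le[of c] by auto

lemma nth_list_decode: "i < length (list_decode c) \<Longrightarrow> list_decode c ! i = nth_num c i"
proof -
  assume i: "i < length (list_decode c)"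
  then have "(tl_num ^^ i) c \<noteq> 0" by (simp add: less_length_list_decode)
  moreover have "list_decode c ! i = hd (list_decode ((tl_num ^^ i) c))"
    using i by (simp add: list_decode_funpow_tl_num hd_drop_conv_nth)
  ultimately show ?thesis
    by (cases "(tl_num ^^ i) c") (simp_all add: nth_num_def hd_num_def)
qed

lemma all_nth_list_decode_iff:
  "(\<forall>i<length (list_decode c). P i (list_decode c ! i)) \<longleftrightarrow>
     (\<forall>i<c. (tl_num ^^ i) c \<noteq> 0 \<longrightarrow> P i (nth_num c i))"
  by (auto simp: less_length_list_decode_iff nth_list_decode)

lemma bex_set_list_decode_iff:
  "(\<exists>u\<in>set (list_decode c). P u) \<longleftrightarrow> (\<exists>i<c. (tl_num ^^ i) c \<noteq> 0 \<and> P (nth_num c i))"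
proof -
  have "(\<exists>u\<in>set (list_decode c). P u) \<longleftrightarrow> \<not> (\<forall>i<length (list_decode c). \<not> P (list_decode c ! i))"
    by (metis in_set_conv_nth)
  then show ?thesis using all_nth_list_decode_iff[of c "\<lambda>i u. \<not> P u"] by blast
qed

lemma length_list_decode_eq_iff:
  "length (list_decode c) = k \<longleftrightarrow> (k = 0 \<or> (tl_num ^^ (k - 1)) c \<noteq> 0) \<and> (tl_num ^^ k) c = 0"
proof -
  have "length (list_decode c) = k \<longleftrightarrow>
      (k = 0 \<or> k - 1 < length (list_decode c)) \<and> \<not> k < length (list_decode c)"
    by arith
  then show ?thesis unfolding less_length_list_decode by simp
qed

section \<open>Derivations of computations\<close>

text \<open>A fact is a number coding either a claim \<open>eval_fact e x y\<close> (the program with code \<open>e\<close>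
  maps \<open>x\<close> to \<open>y\<close>) or a claim \<open>prog_fact e\<close> (\<open>e\<close> is the code of a program).  Derivations are decidable, and the oracle is consulted
  only at arguments not exceeding the coded list; this gives the limit lemma below.\<close>

definition eval_fact :: "nat \<Rightarrow> nat \<Rightarrow> nat \<Rightarrow> nat" where
  "eval_fact e x y = prod_encode (0, prod_encode (e, prod_encode (x, y)))"

definition prog_fact :: "nat \<Rightarrow> nat" where
  "prog_fact e = prod_encode (1, prod_encode (e, 0))"

definition fact_tag :: "nat \<Rightarrow> nat" where
  "fact_tag u = fst (prod_decode u)"

definition fact_prog :: "nat \<Rightarrow> nat" where
  "fact_prog u = fst (prod_decode (snd (prod_decode u)))"

definition fact_arg :: "nat \<Rightarrow> nat" where
  "fact_arg u = fst (prod_decode (snd (prod_decode (snd (prod_decode u)))))"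

definition fact_val :: "nat \<Rightarrow> nat" where
  "fact_val u = snd (prod_decode (snd (prod_decode (snd (prod_decode u)))))"

definition code_kind :: "nat \<Rightarrow> nat" where
  "code_kind e = fst (prod_decode e)"

definition code_args :: "nat \<Rightarrow> nat" where
  "code_args e = snd (prod_decode e)"

definition code_fst :: "nat \<Rightarrow> nat" where
  "code_fst e = fst (prod_decode (code_args e))"

definition code_snd :: "nat \<Rightarrow> nat" where
  "code_snd e = snd (prod_decode (code_args e))"

lemmas fact_accessor_defs = fact_tag_def fact_prog_def fact_arg_def fact_val_def
  code_kind_def code_args_def code_fst_def code_snd_def

lemma fact_accessors_simps [simp]:
  "fact_tag (eval_fact e x y) = 0" "fact_prog (eval_fact e x y) = e"
  "fact_arg (eval_fact e x y) = x" "fact_val (eval_fact e x y) = y"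
  "fact_tag (prog_fact e) = 1" "fact_prog (prog_fact e) = e"
  "code_kind (prod_encode (a, b)) = a" "code_args (prod_encode (a, b)) = b"
  "code_fst (prod_encode (a, prod_encode (b, c))) = b" "code_snd (prod_encode (a, prod_encode (b, c))) = c"
  by (simp_all add: fact_accessor_defs eval_fact_def prog_fact_def)

lemma prod_encode_code_kind_args: "prod_encode (code_kind e, code_args e) = e"
  by (simp add: code_kind_def code_args_def)

lemma code_split: "e = prod_encode (code_kind e, prod_encode (code_fst e, code_snd e))"
  by (simp add: fact_accessor_defs)

lemma fact_arg_le: "fact_arg u \<le> u"
  unfolding fact_arg_def by (meson fst_prod_decode_le snd_prod_decode_le order.trans)

definition justified_prog :: "(nat \<Rightarrow> bool) \<Rightarrow> nat \<Rightarrow> bool" where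
  "justified_prog M e \<longleftrightarrow> (code_kind e \<le> 5 \<and> code_args e = 0)
     \<or> (code_kind e \<in> {6, 7, 8} \<and> M (prog_fact (code_fst e)) \<and> M (prog_fact (code_snd e)))
     \<or> (code_kind e = 9 \<and> M (prog_fact (code_args e)))"

definition justified_basic :: "nat set \<Rightarrow> nat \<Rightarrow> nat \<Rightarrow> nat \<Rightarrow> bool" where
  "justified_basic Ob e x y \<longleftrightarrow> code_args e = 0 \<and>
     ((code_kind e = 0 \<and> y = 0) \<or> (code_kind e = 1 \<and> y = Suc x) \<or> (code_kind e = 2 \<and> y = x)
   \<or> (code_kind e = 3 \<and> y = fst (prod_decode x)) \<or> (code_kind e = 4 \<and> y = snd (prod_decode x))
   \<or> (code_kind e = 5 \<and> y = (if x \<in> Ob then 1 else 0)))"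

definition justified_comp :: "(nat \<Rightarrow> bool) \<Rightarrow> nat \<Rightarrow> nat \<Rightarrow> nat \<Rightarrow> bool" where
  "justified_comp M e x y \<longleftrightarrow> code_kind e = 6 \<and>
     (\<exists>v. M v \<and> fact_tag v = 0 \<and> fact_prog v = code_snd e \<and> fact_arg v = x
          \<and> M (eval_fact (code_fst e) (fact_val v) y))"

definition justified_pair :: "(nat \<Rightarrow> bool) \<Rightarrow> nat \<Rightarrow> nat \<Rightarrow> nat \<Rightarrow> bool" where
  "justified_pair M e x y \<longleftrightarrow> code_kind e = 7
     \<and> M (eval_fact (code_fst e) x (fst (prod_decode y))) \<and> M (eval_fact (code_snd e) x (snd (prod_decode y)))"

definition justified_rec0 :: "(nat \<Rightarrow> bool) \<Rightarrow> nat \<Rightarrow> nat \<Rightarrow> nat \<Rightarrow> bool" where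
  "justified_rec0 M e x y \<longleftrightarrow> code_kind e = 8 \<and> snd (prod_decode x) = 0
     \<and> M (prog_fact e) \<and> M (eval_fact (code_fst e) (fst (prod_decode x)) y)"

definition justified_recS :: "(nat \<Rightarrow> bool) \<Rightarrow> nat \<Rightarrow> nat \<Rightarrow> nat \<Rightarrow> bool" where
  "justified_recS M e x y \<longleftrightarrow> code_kind e = 8 \<and> snd (prod_decode x) \<noteq> 0 \<and>
     (\<exists>v. M v \<and> fact_tag v = 0 \<and> fact_prog v = e
          \<and> fact_arg v = prod_encode (fst (prod_decode x), snd (prod_decode x) - 1)
          \<and> M (eval_fact (code_snd e)
                 (prod_encode (fst (prod_decode x), prod_encode (snd (prod_decode x) - 1, fact_val v))) y))"

definition justified_mu :: "(nat \<Rightarrow> bool) \<Rightarrow> nat \<Rightarrow> nat \<Rightarrow> nat \<Rightarrow> bool" where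
  "justified_mu M e x y \<longleftrightarrow> code_kind e = 9 \<and> M (eval_fact (code_args e) (prod_encode (x, y)) 0)
     \<and> (\<forall>m<y. \<exists>v. M v \<and> fact_tag v = 0 \<and> fact_prog v = code_args e
                    \<and> fact_arg v = prod_encode (x, m) \<and> fact_val v \<noteq> 0)"

definition justified_eval :: "nat set \<Rightarrow> (nat \<Rightarrow> bool) \<Rightarrow> nat \<Rightarrow> nat \<Rightarrow> nat \<Rightarrow> bool" where
  "justified_eval Ob M e x y \<longleftrightarrow> justified_basic Ob e x y \<or> justified_comp M e x y
     \<or> justified_pair M e x y \<or> justified_rec0 M e x y \<or> justified_recS M e x y \<or> justified_mu M e x y"

definition justified :: "nat set \<Rightarrow> (nat \<Rightarrow> bool) \<Rightarrow> nat \<Rightarrow> bool" where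
  "justified Ob M u \<longleftrightarrow>
     (fact_tag u = 0 \<and> justified_eval Ob M (fact_prog u) (fact_arg u) (fact_val u))
   \<or> (fact_tag u = 1 \<and> justified_prog M (fact_prog u))"

definition derivation :: "nat set \<Rightarrow> nat list \<Rightarrow> bool" where
  "derivation Ob L \<longleftrightarrow> (\<forall>i<length L. justified Ob (\<lambda>v. \<exists>j<i. L ! j = v) (L ! i))"

lemmas justified_eval_defs = justified_eval_def justified_basic_def justified_comp_def
  justified_pair_def justified_rec0_def justified_recS_def justified_mu_def

lemma justified_mono:
  assumes "justified Ob M u" and M: "\<And>v. M v \<Longrightarrow> M' v"
  shows "justified Ob M' u"
proof -
  have "justified_comp M e x y \<Longrightarrow> justified_comp M' e x y"
    and "justified_pair M e x y \<Longrightarrow> justified_pair M' e x y"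
    and "justified_rec0 M e x y \<Longrightarrow> justified_rec0 M' e x y"
    and "justified_recS M e x y \<Longrightarrow> justified_recS M' e x y"
    and "justified_mu M e x y \<Longrightarrow> justified_mu M' e x y" for e x y
    using M unfolding justified_comp_def justified_pair_def justified_rec0_def
      justified_recS_def justified_mu_def by blast+
  then have "justified_eval Ob M e x y \<Longrightarrow> justified_eval Ob M' e x y" for e x y
    unfolding justified_eval_def by blast
  moreover have "justified_prog M e \<Longrightarrow> justified_prog M' e" for e
    unfolding justified_prog_def by (elim disjE; use M in blast)
  ultimately show ?thesis using assms(1) unfolding justified_def by blast
qed

lemma justified_cong_oracle:
  "(\<And>q. q \<le> u \<Longrightarrow> q \<in> Ob \<longleftrightarrow> q \<in> Ob') \<Longrightarrow> justified Ob M u = justified Ob' M u"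
  using fact_arg_le[of u] unfolding justified_def justified_eval_def justified_basic_def by simp

definition fact_true :: "nat set \<Rightarrow> nat \<Rightarrow> bool" where
  "fact_true Ob u \<longleftrightarrow>
     (fact_tag u = 0 \<longrightarrow> (\<exists>p. code p = fact_prog u \<and> eval Ob p (fact_arg u) (fact_val u)))
   \<and> (fact_tag u = 1 \<longrightarrow> fact_prog u \<in> range code)"

lemma fact_true_eval_fact: "fact_true Ob (eval_fact e x y) \<longleftrightarrow> (\<exists>p. code p = e \<and> eval Ob p x y)"
  by (simp add: fact_true_def)

lemma fact_true_prog_fact: "fact_true Ob (prog_fact e) \<longleftrightarrow> e \<in> range code"
  by (simp add: fact_true_def)

lemma basic_code_in_range: "k \<le> 5 \<Longrightarrow> prod_encode (k, 0) \<in> range code"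
proof -
  assume "k \<le> 5"
  then have "k \<in> {0, 1, 2, 3, 4, 5}" by auto
  then show ?thesis
    by (elim insertE emptyE; hypsubst; simp only: code.simps(1-6)[symmetric] rangeI)
qed

lemma justified_prog_sound:
  assumes M: "\<And>v. M v \<Longrightarrow> fact_true Ob v" and ok: "justified_prog M e"
  shows "e \<in> range code"
proof -
  consider (basic) "code_kind e \<le> 5" "code_args e = 0"
    | (binary) "code_kind e \<in> {6, 7, 8}" "M (prog_fact (code_fst e))" "M (prog_fact (code_snd e))"
    | (mu) "code_kind e = 9" "M (prog_fact (code_args e))"
    using ok unfolding justified_prog_def by (elim disjE conjE) blast+
  then show ?thesis
  proof cases
    case basic
    then have "e = prod_encode (code_kind e, 0)"
      using code_split[of e] by (simp add: code_fst_def code_snd_def)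
    then show ?thesis using basic_code_in_range basic(1) by metis
  next
    case binary
    with M obtain f g where "code f = code_fst e" "code g = code_snd e"
      by (metis fact_true_prog_fact rangeE)
    then obtain k where "k \<in> {6, 7, 8}" "e = prod_encode (k, prod_encode (code f, code g))"
      using binary(1) code_split[of e] by metis
    then show ?thesis
      by (elim insertE emptyE; hypsubst; simp only: code.simps(7-9)[symmetric] rangeI)
  next
    case mu
    with M obtain f where "code f = code_args e"
      by (metis fact_true_prog_fact rangeE)
    then have "code (Mu f) = e"
      using mu prod_encode_code_kind_args[of e] by simp
    then show ?thesis by blast
  qed
qed

lemma justified_basic_sound:
  assumes "justified_basic Ob e x y"
  shows "\<exists>p. code p = e \<and> eval Ob p x y"
proof -
  have e: "e = prod_encode (code_kind e, 0)"
    using assms prod_encode_code_kind_args[of e] by (simp add: justified_basic_def)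
  from assms show ?thesis
    unfolding justified_basic_def
  proof (elim conjE disjE)
    assume "code_kind e = 0" "y = 0"
    then show ?thesis using e by (intro exI[of _ Z]) (simp add: eval.intros)
  next
    assume "code_kind e = 1" "y = Suc x"
    then show ?thesis using e by (intro exI[of _ S]) (simp add: eval.intros)
  next
    assume "code_kind e = 2" "y = x"
    then show ?thesis using e by (intro exI[of _ recf.Id]) (simp add: eval.intros)
  next
    assume "code_kind e = 3" "y = fst (prod_decode x)"
    then show ?thesis using e by (intro exI[of _ Fst]) (simp add: eval.intros)
  next
    assume "code_kind e = 4" "y = snd (prod_decode x)"
    then show ?thesis using e by (intro exI[of _ Snd]) (simp add: eval.intros)
  next
    assume "code_kind e = 5" "y = (if x \<in> Ob then 1 else 0)"
    then show ?thesis using e by (intro exI[of _ Orc]) (simp add: eval.intros)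
  qed
qed

context
  fixes Ob :: "nat set" and M :: "nat \<Rightarrow> bool"
  assumes M_true: "\<And>v. M v \<Longrightarrow> fact_true Ob v"
begin

lemma M_eval_fact: "M (eval_fact e x y) \<Longrightarrow> \<exists>p. code p = e \<and> eval Ob p x y"
  using M_true fact_true_eval_fact by blast

lemma M_eval_fact_tagged:
  "M v \<Longrightarrow> fact_tag v = 0 \<Longrightarrow> \<exists>p. code p = fact_prog v \<and> eval Ob p (fact_arg v) (fact_val v)"
  using M_true unfolding fact_true_def by blast

lemma justified_comp_sound:
  assumes "justified_comp M e x y"
  shows "\<exists>p. code p = e \<and> eval Ob p x y"
proof -
  from assms obtain v where k: "code_kind e = 6" and v: "M v" "fact_tag v = 0"
      "fact_prog v = code_snd e" "fact_arg v = x"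
    and fy: "M (eval_fact (code_fst e) (fact_val v) y)"
    unfolding justified_comp_def by blast
  from M_eval_fact_tagged[OF v(1,2)] v(3,4) obtain g where "code g = code_snd e" "eval Ob g x (fact_val v)"
    by auto
  moreover from M_eval_fact[OF fy] obtain f where "code f = code_fst e" "eval Ob f (fact_val v) y"
    by blast
  ultimately show ?thesis
    using k code_split[of e] by (intro exI[of _ "Comp f g"]) (auto intro: eval_Comp)
qed

lemma justified_pair_sound:
  assumes "justified_pair M e x y"
  shows "\<exists>p. code p = e \<and> eval Ob p x y"
proof -
  from assms have k: "code_kind e = 7"
    and "M (eval_fact (code_fst e) x (fst (prod_decode y)))"
    and "M (eval_fact (code_snd e) x (snd (prod_decode y)))"
    unfolding justified_pair_def by auto
  then obtain f g where "code f = code_fst e" "eval Ob f x (fst (prod_decode y))"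
    and "code g = code_snd e" "eval Ob g x (snd (prod_decode y))"
    using M_eval_fact by meson
  then have "eval Ob (recf.Pair f g) x (prod_encode (fst (prod_decode y), snd (prod_decode y)))"
    by (intro eval_Pair)
  moreover have "code (recf.Pair f g) = e"
    using k code_split[of e] \<open>code f = code_fst e\<close> \<open>code g = code_snd e\<close> by simp
  ultimately show ?thesis by (intro exI[of _ "recf.Pair f g"]) simp
qed

lemma code_eq_PrimRecE:
  assumes "code p = e" "code_kind e = 8"
  obtains f g where "p = PrimRec f g" "code f = code_fst e" "code g = code_snd e"
  using assms by (cases p) auto

lemma justified_rec0_sound:
  assumes "justified_rec0 M e x y"
  shows "\<exists>p. code p = e \<and> eval Ob p x y"
proof -
  from assms have k: "code_kind e = 8" and x: "snd (prod_decode x) = 0"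
    and "M (prog_fact e)" and fy: "M (eval_fact (code_fst e) (fst (prod_decode x)) y)"
    unfolding justified_rec0_def by auto
  then obtain p where p: "code p = e"
    using M_true fact_true_prog_fact by (metis rangeE)
  then obtain f g where fg: "p = PrimRec f g" "code f = code_fst e"
    using k by (rule code_eq_PrimRecE)
  from M_eval_fact[OF fy] fg(2) have "eval Ob f (fst (prod_decode x)) y"
    by (metis code_eq_iff)
  then have "eval Ob p (prod_encode (fst (prod_decode x), 0)) y"
    unfolding fg(1) by (rule eval_PrimRec0)
  then show ?thesis using p x by (metis prod.collapse prod_decode_inverse)
qed

lemma justified_recS_sound:
  assumes "justified_recS M e x y"
  shows "\<exists>p. code p = e \<and> eval Ob p x y"
proof -
  define a n where "a = fst (prod_decode x)" and "n = snd (prod_decode x) - 1"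
  from assms obtain v where k: "code_kind e = 8" and x: "x = prod_encode (a, Suc n)"
    and v: "M v" "fact_tag v = 0" "fact_prog v = e" "fact_arg v = prod_encode (a, n)"
    and fy: "M (eval_fact (code_snd e) (prod_encode (a, prod_encode (n, fact_val v))) y)"
    unfolding justified_recS_def a_def n_def by auto
  from M_eval_fact_tagged[OF v(1,2)] v(3,4) obtain p
    where p: "code p = e" "eval Ob p (prod_encode (a, n)) (fact_val v)"
    by auto
  from p(1) k obtain f g where fg: "p = PrimRec f g" "code g = code_snd e"
    by (rule code_eq_PrimRecE)
  from M_eval_fact[OF fy] fg(2) have "eval Ob g (prod_encode (a, prod_encode (n, fact_val v))) y"
    by (metis code_eq_iff)
  with p fg(1) have "eval Ob p (prod_encode (a, Suc n)) y"
    by (auto intro: eval_PrimRecS)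
  then show ?thesis using p x by blast
qed

lemma justified_mu_sound:
  assumes "justified_mu M e x y"
  shows "\<exists>p. code p = e \<and> eval Ob p x y"
proof -
  from assms have k: "code_kind e = 9" and fy: "M (eval_fact (code_args e) (prod_encode (x, y)) 0)"
    and below: "\<forall>m<y. \<exists>v. M v \<and> fact_tag v = 0 \<and> fact_prog v = code_args e
                           \<and> fact_arg v = prod_encode (x, m) \<and> fact_val v \<noteq> 0"
    unfolding justified_mu_def by auto
  from M_eval_fact[OF fy] obtain f where f: "code f = code_args e" "eval Ob f (prod_encode (x, y)) 0"
    by blast
  have "\<exists>w. w \<noteq> 0 \<and> eval Ob f (prod_encode (x, m)) w" if "m < y" for m
  proof -
    from below that obtain v where "M v" "fact_tag v = 0" "fact_prog v = code_args e"
      "fact_arg v = prod_encode (x, m)" "fact_val v \<noteq> 0"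
      by blast
    with M_eval_fact_tagged f(1) show ?thesis by (metis code_eq_iff)
  qed
  with f have "eval Ob (Mu f) x y" by (blast intro: eval_Mu)
  moreover have "code (Mu f) = e"
    using k f(1) prod_encode_code_kind_args[of e] by simp
  ultimately show ?thesis by blast
qed

lemma justified_sound: "justified Ob M u \<Longrightarrow> fact_true Ob u"
  unfolding justified_def justified_eval_def fact_true_def
  using justified_basic_sound justified_comp_sound justified_pair_sound justified_rec0_sound
    justified_recS_sound justified_mu_sound justified_prog_sound[OF M_true]
  by auto

end

lemma derivation_sound: "derivation Ob L \<Longrightarrow> u \<in> set L \<Longrightarrow> fact_true Ob u"
proof -
  assume L: "derivation Ob L"
  have "fact_true Ob (L ! i)" if "i < length L" for i
    using that
  proof (induction i rule: less_induct)
    case (less i)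
    have "\<And>v. \<exists>j<i. L ! j = v \<Longrightarrow> fact_true Ob v"
      using less by auto
    moreover have "justified Ob (\<lambda>v. \<exists>j<i. L ! j = v) (L ! i)"
      using L less.prems unfolding derivation_def by blast
    ultimately show ?case by (rule justified_sound)
  qed
  then show "u \<in> set L \<Longrightarrow> fact_true Ob u" by (metis in_set_conv_nth)
qed

lemma derivation_Nil: "derivation Ob []"
  unfolding derivation_def by simp

lemma derivation_snoc_iff:
  "derivation Ob (L @ [u]) \<longleftrightarrow> derivation Ob L \<and> justified Ob (\<lambda>v. v \<in> set L) u"
proof -
  have prefix: "(\<lambda>v. \<exists>j<i. (L @ [u]) ! j = v) = (\<lambda>v. \<exists>j<i. L ! j = v)" if i: "i \<le> length L" for i
  proof -
    have "(L @ [u]) ! j = L ! j" if "j < i" for j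
      using that i by (simp add: nth_append)
    then show ?thesis by (intro ext) auto
  qed
  have "(\<lambda>v. \<exists>j<length L. L ! j = v) = (\<lambda>v. v \<in> set L)"
    by (auto simp: in_set_conv_nth)
  then show ?thesis
    unfolding derivation_def using prefix by (auto simp: less_Suc_eq nth_append)
qed

lemma derivation_append: "derivation Ob L1 \<Longrightarrow> derivation Ob L2 \<Longrightarrow> derivation Ob (L1 @ L2)"
proof (induction L2 rule: rev_induct)
  case (snoc u L2)
  then show ?case
    unfolding append_assoc[symmetric] derivation_snoc_iff by (auto elim: justified_mono)
qed simp

definition derivable :: "nat set \<Rightarrow> nat \<Rightarrow> bool" where
  "derivable Ob u \<longleftrightarrow> (\<exists>L. derivation Ob L \<and> u \<in> set L)"

lemma derivation_covering:
  "finite U \<Longrightarrow> (\<And>u. u \<in> U \<Longrightarrow> derivable Ob u) \<Longrightarrow> \<exists>L. derivation Ob L \<and> U \<subseteq> set L"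
proof (induction U rule: finite_induct)
  case empty
  then show ?case using derivation_Nil by blast
next
  case (insert u U)
  then obtain L where "derivation Ob L" "U \<subseteq> set L"
    by auto
  moreover obtain L' where "derivation Ob L'" "u \<in> set L'"
    using insert.prems unfolding derivable_def by blast
  ultimately show ?case using derivation_append by (intro exI[of _ "L @ L'"]) auto
qed

lemma derivable_step:
  assumes "finite U" "\<And>v. v \<in> U \<Longrightarrow> derivable Ob v" "justified Ob (\<lambda>v. v \<in> U) u"
  shows "derivable Ob u"
proof -
  from derivation_covering[OF assms(1,2)] obtain L where "derivation Ob L" "U \<subseteq> set L"
    by blast
  then have "derivation Ob (L @ [u])"
    using assms(3) by (auto simp: derivation_snoc_iff elim: justified_mono)
  then show ?thesis unfolding derivable_def by auto
qed

lemma derivable_prog_fact: "derivable Ob (prog_fact (code p))"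
proof (induction p)
  case (Comp f g)
  show ?case
    by (rule derivable_step[of "{prog_fact (code f), prog_fact (code g)}"])
      (use Comp.IH in \<open>auto simp: justified_def justified_prog_def\<close>)
next
  case (Pair f g)
  show ?case
    by (rule derivable_step[of "{prog_fact (code f), prog_fact (code g)}"])
      (use Pair.IH in \<open>auto simp: justified_def justified_prog_def\<close>)
next
  case (PrimRec f g)
  show ?case
    by (rule derivable_step[of "{prog_fact (code f), prog_fact (code g)}"])
      (use PrimRec.IH in \<open>auto simp: justified_def justified_prog_def\<close>)
next
  case (Mu f)
  show ?case
    by (rule derivable_step[of "{prog_fact (code f)}"])
      (use Mu.IH in \<open>auto simp: justified_def justified_prog_def\<close>)
qed (rule derivable_step[of "{}"]; simp add: justified_def justified_prog_def)+

lemma derivable_Mu: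
  assumes zero: "derivable Ob (eval_fact (code f) (prod_encode (a, n)) 0)"
    and below: "\<And>m. m < n \<Longrightarrow> \<exists>w. w \<noteq> 0 \<and> derivable Ob (eval_fact (code f) (prod_encode (a, m)) w)"
  shows "derivable Ob (eval_fact (code (Mu f)) a n)"
proof -
  obtain w where w: "\<And>m. m < n \<Longrightarrow> w m \<noteq> 0"
    "\<And>m. m < n \<Longrightarrow> derivable Ob (eval_fact (code f) (prod_encode (a, m)) (w m))"
    using below by metis
  let ?U = "insert (eval_fact (code f) (prod_encode (a, n)) 0)
              ((\<lambda>m. eval_fact (code f) (prod_encode (a, m)) (w m)) ` {..<n})"
  show ?thesis
  proof (rule derivable_step[of ?U])
    show "derivable Ob v" if "v \<in> ?U" for v
      using that zero w(2) by auto
    have "\<forall>m<n. \<exists>v. v \<in> ?U \<and> fact_tag v = 0 \<and> fact_prog v = code f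
        \<and> fact_arg v = prod_encode (a, m) \<and> fact_val v \<noteq> 0"
      using w(1) by (auto intro!: exI[of _ "eval_fact (code f) (prod_encode (a, _)) (w _)"])
    then show "justified Ob (\<lambda>v. v \<in> ?U) (eval_fact (code (Mu f)) a n)"
      unfolding justified_def justified_eval_def justified_mu_def by auto
  qed simp
qed

lemma derivable_eval_fact: "eval Ob p x y \<Longrightarrow> derivable Ob (eval_fact (code p) x y)"
proof (induction rule: eval.induct)
  case (eval_Comp g x y f z)
  show ?case
    by (rule derivable_step[of "{eval_fact (code g) x y, eval_fact (code f) y z}"])
      (use eval_Comp.IH in \<open>auto simp: justified_def justified_eval_defs intro!: exI[of _ "eval_fact (code g) x y"]\<close>)
next
  case (eval_Pair f x y g z)
  show ?case
    by (rule derivable_step[of "{eval_fact (code f) x y, eval_fact (code g) x z}"])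
      (use eval_Pair.IH in \<open>auto simp: justified_def justified_eval_defs\<close>)
next
  case (eval_PrimRec0 f a y g)
  show ?case
    by (rule derivable_step[of "{eval_fact (code f) a y, prog_fact (code (PrimRec f g))}"])
      (use eval_PrimRec0.IH derivable_prog_fact[of Ob "PrimRec f g"] in \<open>auto simp: justified_def justified_eval_defs\<close>)
next
  case (eval_PrimRecS f g a n y z)
  let ?prev = "eval_fact (code (PrimRec f g)) (prod_encode (a, n)) y"
  show ?case
    by (rule derivable_step[of "{?prev, eval_fact (code g) (prod_encode (a, prod_encode (n, y))) z}"])
      (use eval_PrimRecS.IH in \<open>auto simp: justified_def justified_eval_defs intro!: exI[of _ ?prev]\<close>)
next
  case (eval_Mu f a n)
  then show ?case by (intro derivable_Mu) blast+
qed (rule derivable_step[of "{}"]; simp add: justified_def justified_eval_defs)+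

lemma computable_fact_accessors:
  assumes "computable X f"
  shows "computable X (\<lambda>x. fact_tag (f x))" "computable X (\<lambda>x. fact_prog (f x))"
    "computable X (\<lambda>x. fact_arg (f x))" "computable X (\<lambda>x. fact_val (f x))"
    "computable X (\<lambda>x. code_kind (f x))" "computable X (\<lambda>x. code_args (f x))"
    "computable X (\<lambda>x. code_fst (f x))" "computable X (\<lambda>x. code_snd (f x))"
    "computable X (\<lambda>x. prog_fact (f x))"
  unfolding fact_accessor_defs prog_fact_def by (intro computable_intros assms)+

lemma computable_eval_fact:
  "computable X f \<Longrightarrow> computable X g \<Longrightarrow> computable X h \<Longrightarrow> computable X (\<lambda>x. eval_fact (f x) (g x) (h x))"
  unfolding eval_fact_def by (intro computable_intros)

lemmas computable_derivation_intros = computable_intros computable_fact_accessors computable_eval_fact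
  computable_nth_num computable_funpow_tl_num decidable_all_less decidable_ex_less

lemma derivation_list_decode_iff:
  "derivation Ob (list_decode c) \<longleftrightarrow>
     (\<forall>i<c. (tl_num ^^ i) c \<noteq> 0 \<longrightarrow> justified Ob (\<lambda>v. \<exists>j<i. nth_num c j = v) (nth_num c i))"
proof -
  have "(\<lambda>v. \<exists>j<i. list_decode c ! j = v) = (\<lambda>v. \<exists>j<i. nth_num c j = v)"
    if i: "i < length (list_decode c)" for i
  proof -
    have "list_decode c ! j = nth_num c j" if "j < i" for j
      using that i by (simp add: nth_list_decode)
    then show ?thesis by (intro ext) auto
  qed
  then have "derivation Ob (list_decode c) \<longleftrightarrow>
      (\<forall>i<length (list_decode c). justified Ob (\<lambda>v. \<exists>j<i. nth_num c j = v) (list_decode c ! i))"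
    unfolding derivation_def by auto
  also have "\<dots> \<longleftrightarrow> (\<forall>i<c. (tl_num ^^ i) c \<noteq> 0 \<longrightarrow> justified Ob (\<lambda>v. \<exists>j<i. nth_num c j = v) (nth_num c i))"
    by (rule all_nth_list_decode_iff)
  finally show ?thesis .
qed

lemma decidable_justified:
  assumes Ob: "decidable X (\<lambda>z. snd (prod_decode z) \<in> Ob (fst (prod_decode z)))"
    and s: "computable X s" and c: "computable X c" and i: "computable X i" and u: "computable X u"
  shows "decidable X (\<lambda>x. justified (Ob (s x)) (\<lambda>v. \<exists>j<i x. nth_num (c x) j = v) (u x))"
proof -
  have Ob_app: "computable X f \<Longrightarrow> computable X g \<Longrightarrow> decidable X (\<lambda>x. f x \<in> Ob (g x))" for f g
    using decidable_app2[OF Ob] by simp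
  have bounded_ex: "(\<exists>v. (\<exists>j<n. g j = v) \<and> P v) \<longleftrightarrow> (\<exists>j<n. P (g j))" for n g P
    by blast
  show ?thesis
    unfolding justified_def justified_eval_defs justified_prog_def
    by (simp only: bounded_ex, simp)
      (intro computable_derivation_intros Ob_app s c i u computable_comp[OF s] computable_comp[OF c]
        computable_comp[OF i] computable_comp[OF u])
qed

lemma decidable_derivation:
  assumes Ob: "decidable X (\<lambda>z. snd (prod_decode z) \<in> Ob (fst (prod_decode z)))"
    and s: "computable X s" and c: "computable X c"
  shows "decidable X (\<lambda>x. derivation (Ob (s x)) (list_decode (c x)))"
  unfolding derivation_list_decode_iff
  by (intro computable_derivation_intros decidable_justified[OF Ob] s c computable_comp[OF s]
      computable_comp[OF c])

lemma derivable_iff_list_decode: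
  "derivable Ob u \<longleftrightarrow> (\<exists>c. derivation Ob (list_decode c) \<and> u \<in> set (list_decode c))"
  unfolding derivable_def by (metis list_encode_inverse)

lemma derivation_cong_oracle:
  assumes "\<And>q. q < c \<Longrightarrow> q \<in> Ob \<longleftrightarrow> q \<in> Ob'"
  shows "derivation Ob (list_decode c) = derivation Ob' (list_decode c)"
proof -
  have "justified Ob M u = justified Ob' M u" if "u \<in> set (list_decode c)" for M u
    using that assms list_decode_le[of c] by (intro justified_cong_oracle) auto
  then show ?thesis unfolding derivation_def by (simp add: nth_mem)
qed


section \<open>The limit lemma\<close>

definition fact_about :: "nat \<Rightarrow> nat \<Rightarrow> nat \<Rightarrow> bool" where
  "fact_about e n u \<longleftrightarrow> fact_tag u = 0 \<and> fact_prog u = e \<and> fact_arg u = n"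

text \<open>\<open>jump_stage X s\<close> is the part of the jump witnessed by a derivation with code below \<open>s\<close>,
  and \<open>jump_approx X e s n\<close> guesses the value of program \<open>e\<close> on \<open>n\<close> under oracle \<^term>\<open>jump X\<close>
  by reading it off the least derivation below \<open>s\<close> that is correct for the oracle \<open>jump_stage X s\<close>.\<close>

definition jump_stage :: "nat set \<Rightarrow> nat \<Rightarrow> nat set" where
  "jump_stage X s =
     {q. \<exists>c<s. derivation X (list_decode c) \<and> (\<exists>u\<in>set (list_decode c). fact_about q q u)}"

definition stage_derivation :: "nat set \<Rightarrow> nat \<Rightarrow> nat \<Rightarrow> nat \<Rightarrow> nat \<Rightarrow> bool" where
  "stage_derivation X e s n c \<longleftrightarrow>
     derivation (jump_stage X s) (list_decode c) \<and> (\<exists>u\<in>set (list_decode c). fact_about e n u)"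

definition jump_approx :: "nat set \<Rightarrow> nat \<Rightarrow> nat \<Rightarrow> nat \<Rightarrow> nat" where
  "jump_approx X e s n =
     (let c = bounded_least (stage_derivation X e s n) s;
          i = bounded_least (\<lambda>i. (tl_num ^^ i) c \<noteq> 0 \<and> fact_about e n (nth_num c i)) c
      in fact_val (nth_num c i))"

lemma decidable_fact_about:
  "computable X f \<Longrightarrow> computable X g \<Longrightarrow> computable X h \<Longrightarrow> decidable X (\<lambda>x. fact_about (f x) (g x) (h x))"
  unfolding fact_about_def by (intro computable_derivation_intros)

lemma decidable_jump_stage: "decidable X (\<lambda>z. snd (prod_decode z) \<in> jump_stage X (fst (prod_decode z)))"
  unfolding jump_stage_def mem_Collect_eq bex_set_list_decode_iff
  by (intro computable_derivation_intros decidable_fact_about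
      decidable_derivation[where Ob="\<lambda>_. X" and s="\<lambda>x. x", OF decidable_oracle[OF computable_snd[OF computable_id]]])

lemma computable_jump_approx:
  "computable X (\<lambda>z. jump_approx X e (fst (prod_decode z)) (snd (prod_decode z)))"
  unfolding jump_approx_def Let_def stage_derivation_def bex_set_list_decode_iff
  by (intro computable_derivation_intros computable_bounded_least decidable_fact_about
      decidable_derivation[OF decidable_jump_stage])

lemma jump_stage_subset: "jump_stage X s \<subseteq> jump X"
proof
  fix q
  assume "q \<in> jump_stage X s"
  then obtain c u where "derivation X (list_decode c)" "u \<in> set (list_decode c)" "fact_about q q u"
    unfolding jump_stage_def by blast
  then have "\<exists>p. code p = q \<and> eval X p q (fact_val u)"
    using derivation_sound unfolding fact_true_def fact_about_def by fastforce
  then show "q \<in> jump X" unfolding jump_def by blast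
qed

lemma jump_stage_eventually_agrees: "\<exists>S. \<forall>s\<ge>S. \<forall>q\<le>b. q \<in> jump_stage X s \<longleftrightarrow> q \<in> jump X"
proof -
  let ?J = "{..b} \<inter> jump X"
  have "\<forall>q\<in>?J. \<exists>c. derivation X (list_decode c) \<and> (\<exists>u\<in>set (list_decode c). fact_about q q u)"
  proof
    fix q
    assume "q \<in> ?J"
    then obtain p y where "code p = q" "eval X p q y" unfolding jump_def by blast
    then have "derivable X (eval_fact q q y)" using derivable_eval_fact by blast
    then obtain c where "derivation X (list_decode c)" "eval_fact q q y \<in> set (list_decode c)"
      unfolding derivable_iff_list_decode by blast
    then show "\<exists>c. derivation X (list_decode c) \<and> (\<exists>u\<in>set (list_decode c). fact_about q q u)"
      unfolding fact_about_def by (intro exI[of _ c] conjI bexI[of _ "eval_fact q q y"]) simp_all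
  qed
  then obtain w where w: "\<And>q. q \<in> ?J \<Longrightarrow> derivation X (list_decode (w q))
      \<and> (\<exists>u\<in>set (list_decode (w q)). fact_about q q u)"
    by metis
  have "q \<in> jump_stage X s" if "q \<in> ?J" "Suc (Max (w ` ?J)) \<le> s" for q s
  proof -
    have "w q \<le> Max (w ` ?J)" using that(1) by (intro Max_ge) auto
    then have "w q < s" using that(2) by simp
    then show ?thesis using w[OF that(1)] unfolding jump_stage_def by blast
  qed
  then show ?thesis using jump_stage_subset by blast
qed

lemma jump_approx_sound:
  assumes "c0 < s" "stage_derivation X e s n c0"
    and sound: "\<And>c. c \<le> c0 \<Longrightarrow> derivation (jump_stage X s) (list_decode c) \<Longrightarrow>
                    derivation (jump X) (list_decode c)"
  shows "\<exists>p. code p = e \<and> eval (jump X) p n (jump_approx X e s n)"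
proof -
  define c where "c = bounded_least (stage_derivation X e s n) s"
  define P where "P i \<longleftrightarrow> (tl_num ^^ i) c \<noteq> 0 \<and> fact_about e n (nth_num c i)" for i
  define i where "i = bounded_least P c"
  have "\<exists>j<s. stage_derivation X e s n j" using assms(1,2) by blast
  note c_least = bounded_leastI[OF this, folded c_def]
  then have "c \<le> c0" using assms(2) by (meson not_less)
  with c_least sound have c: "derivation (jump X) (list_decode c)"
    unfolding stage_derivation_def by blast
  from c_least have "\<exists>i<c. P i"
    unfolding stage_derivation_def bex_set_list_decode_iff P_def by blast
  then have "(tl_num ^^ i) c \<noteq> 0" and about: "fact_about e n (nth_num c i)"
    using bounded_leastI[of c P] unfolding i_def P_def by blast+
  then have "nth_num c i \<in> set (list_decode c)"
    by (metis less_length_list_decode nth_list_decode nth_mem)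
  then have "fact_true (jump X) (nth_num c i)" using c by (rule derivation_sound[rotated])
  moreover have "jump_approx X e s n = fact_val (nth_num c i)"
    unfolding jump_approx_def Let_def c_def[symmetric] P_def[symmetric] i_def[symmetric] ..
  ultimately show ?thesis using about unfolding fact_true_def fact_about_def by simp
qed

lemma limit_lemma:
  assumes F: "\<And>n. eval (jump X) p n (F n)"
  shows "\<exists>s0. \<forall>s\<ge>s0. jump_approx X (code p) s n = F n"
proof -
  obtain c0 where c0: "derivation (jump X) (list_decode c0)"
      "eval_fact (code p) n (F n) \<in> set (list_decode c0)"
    using derivable_eval_fact[OF F] unfolding derivable_iff_list_decode by blast
  obtain S where S: "\<And>s q. S \<le> s \<Longrightarrow> q \<le> c0 \<Longrightarrow> q \<in> jump_stage X s \<longleftrightarrow> q \<in> jump X"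
    using jump_stage_eventually_agrees by blast
  have "jump_approx X (code p) s n = F n" if s: "max S (Suc c0) \<le> s" for s
  proof -
    have agree: "derivation (jump_stage X s) (list_decode c) = derivation (jump X) (list_decode c)"
      if "c \<le> c0" for c
      using that s S by (intro derivation_cong_oracle) auto
    have "stage_derivation X (code p) s n c0"
      unfolding stage_derivation_def fact_about_def using agree c0 by force
    then obtain p' where "code p' = code p" "eval (jump X) p' n (jump_approx X (code p) s n)"
      using jump_approx_sound[of c0 s] s agree by fastforce
    then show ?thesis using F eval_deterministic by (metis code_eq_iff)
  qed
  then show ?thesis by blast
qed

section \<open>Sets that are \<open>\<Delta>\<^sub>2\<close> relative to \<open>X\<close> are computable from the jump\<close>

lemma turing_reducible_iff_decidable: "turing_reducible A Y \<longleftrightarrow> decidable Y (\<lambda>x. x \<in> A)"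
  unfolding turing_reducible_def decidable_def computable_def ..

lemma computable_code_const_prog: "computable X (\<lambda>x. code (const_prog x))"
proof -
  have "computable X (\<lambda>x. rec_nat (prod_encode (0, 0)) (\<lambda>n r. prod_encode (6, prod_encode (prod_encode (1, 0), r))) x)"
    by (rule computable_rec_nat[where F="\<lambda>_. prod_encode (0, 0)"
          and G="\<lambda>_ n r. prod_encode (6, prod_encode (prod_encode (1, 0), r))" and a="\<lambda>x. x"])
      (intro computable_intros)+
  moreover have "rec_nat (prod_encode (0, 0)) (\<lambda>n r. prod_encode (6, prod_encode (prod_encode (1, 0), r))) x
      = code (const_prog x)" for x
    by (induction x) simp_all
  ultimately show ?thesis by simp
qed

lemma eval_Comp_const_prog_iff: "eval X (Comp p (const_prog a)) x v \<longleftrightarrow> eval X p a v"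
  by (metis eval_CompE eval_Comp eval_const_prog eval_deterministic)

lemma eval_Mu_defined_iff:
  assumes p: "\<And>z. eval X p z (if P (fst (prod_decode z)) (snd (prod_decode z)) then 1 else 0)"
  shows "(\<exists>v. eval X (Mu p) a v) \<longleftrightarrow> (\<exists>y. \<not> P a y)"
proof
  assume "\<exists>v. eval X (Mu p) a v"
  then obtain v where "eval X p (prod_encode (a, v)) 0" by (blast elim: eval_MuE)
  with p[of "prod_encode (a, v)"] have "\<not> P a v" using eval_deterministic by fastforce
  then show "\<exists>y. \<not> P a y" ..
next
  assume "\<exists>y. \<not> P a y"
  have "eval X (Mu p) a (LEAST y. \<not> P a y)"
  proof (rule eval_Mu_Least)
    show "eval X p (prod_encode (a, m)) (if \<not> P a m then 0 else 1)" for m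
      using p[of "prod_encode (a, m)"] by (cases "P a m") simp_all
  qed fact
  then show "\<exists>v. eval X (Mu p) a v" ..
qed

lemma code_in_jump_iff: "code p \<in> jump X \<longleftrightarrow> (\<exists>v. eval X p (code p) v)"
  unfolding jump_def by (auto simp: code_eq_iff)

lemma decidable_jump_all:
  assumes "decidable X (\<lambda>z. P (fst (prod_decode z)) (snd (prod_decode z)))"
  shows "decidable (jump X) (\<lambda>a. \<forall>y. P a y)"
proof -
  from assms obtain p where p: "\<And>z. eval X p z (if P (fst (prod_decode z)) (snd (prod_decode z)) then 1 else 0)"
    unfolding decidable_def computable_def by blast
  have "code (Comp (Mu p) (const_prog a)) \<in> jump X \<longleftrightarrow> (\<exists>y. \<not> P a y)" for a
    unfolding code_in_jump_iff eval_Comp_const_prog_iff by (rule eval_Mu_defined_iff[OF p])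
  moreover have "decidable (jump X) (\<lambda>a. code (Comp (Mu p) (const_prog a)) \<in> jump X)"
    unfolding code.simps(7) by (intro decidable_oracle computable_intros computable_code_const_prog)
  ultimately have "decidable (jump X) (\<lambda>a. \<not> (\<forall>y. P a y))"
    by simp
  from decidable_not[OF this] show ?thesis by simp
qed

theorem delta2_turing_reducible_jump:
  assumes "decidable X (\<lambda>z. P1 (fst (prod_decode z)) (snd (prod_decode z)))"
    and "decidable X (\<lambda>z. P0 (fst (prod_decode z)) (snd (prod_decode z)))"
    and in_A: "\<And>n. n \<in> A \<longleftrightarrow> (\<exists>x. \<forall>y. P1 (prod_encode (n, x)) y)"
    and not_in_A: "\<And>n. n \<notin> A \<longleftrightarrow> (\<exists>x. \<forall>y. P0 (prod_encode (n, x)) y)"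
  shows "turing_reducible A (jump X)"
proof -
  define Q1 Q0 where "Q1 a \<longleftrightarrow> (\<forall>y. P1 a y)" and "Q0 a \<longleftrightarrow> (\<forall>y. P0 a y)" for a
  have Q1: "decidable (jump X) Q1" and Q0: "decidable (jump X) Q0"
    unfolding Q1_def Q0_def using assms(1,2) by (auto intro: decidable_jump_all)
  define w where "w n = (LEAST x. Q1 (prod_encode (n, x)) \<or> Q0 (prod_encode (n, x)))" for n
  have "\<exists>x. Q1 (prod_encode (n, x)) \<or> Q0 (prod_encode (n, x))" for n
    using in_A not_in_A unfolding Q1_def Q0_def by blast
  then have "computable (jump X) w"
    unfolding w_def by (intro computable_Least decidable_disj decidable_comp[OF Q1] decidable_comp[OF Q0]
        computable_intros)
  moreover have "Q1 (prod_encode (n, w n)) \<or> Q0 (prod_encode (n, w n))" for n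
    unfolding w_def by (rule LeastI_ex) fact
  then have "n \<in> A \<longleftrightarrow> Q1 (prod_encode (n, w n))" for n
    using in_A not_in_A unfolding Q1_def Q0_def by blast
  ultimately show ?thesis
    unfolding turing_reducible_iff_decidable
    by (simp add: decidable_comp[OF Q1] computable_intros)
qed

section \<open>A dense order on payloads\<close>

text \<open>The payload \<open>0\<close> is a greatest element; a payload \<open>d \<noteq> 0\<close> with \<open>d - 1 = \<langle>m, e\<rangle>\<close> stands
  for the dyadic rational \<open>(2m + 1) / 2\<^sup>e\<close>.  So below every payload there is a dense order
  without least element.\<close>

definition dyadic_code :: "nat \<Rightarrow> nat \<Rightarrow> nat" where
  "dyadic_code m e = Suc (prod_encode (m, e))"

definition dyadic_num :: "nat \<Rightarrow> nat" where
  "dyadic_num d = 2 * fst (prod_decode (d - 1)) + 1"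

definition dyadic_exp :: "nat \<Rightarrow> nat" where
  "dyadic_exp d = snd (prod_decode (d - 1))"

definition dyadic_less :: "nat \<Rightarrow> nat \<Rightarrow> bool" where
  "dyadic_less d1 d2 \<longleftrightarrow>
     d1 \<noteq> 0 \<and> (d2 = 0 \<or> dyadic_num d1 * 2 ^ dyadic_exp d2 < dyadic_num d2 * 2 ^ dyadic_exp d1)"

lemma dyadic_code_simps [simp]:
  "dyadic_num (dyadic_code m e) = 2 * m + 1" "dyadic_exp (dyadic_code m e) = e" "dyadic_code m e \<noteq> 0"
  unfolding dyadic_num_def dyadic_exp_def dyadic_code_def by simp_all

lemma dyadic_less_iff_real:
  assumes "d1 \<noteq> 0" "d2 \<noteq> 0"
  shows "dyadic_less d1 d2 \<longleftrightarrow>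
    real (dyadic_num d1) / 2 ^ dyadic_exp d1 < real (dyadic_num d2) / 2 ^ dyadic_exp d2"
proof -
  have "dyadic_less d1 d2 \<longleftrightarrow>
      real (dyadic_num d1 * 2 ^ dyadic_exp d2) < real (dyadic_num d2 * 2 ^ dyadic_exp d1)"
    using assms unfolding dyadic_less_def by (simp only: of_nat_less_iff simp_thms)
  also have "\<dots> \<longleftrightarrow> real (dyadic_num d1) * 2 ^ dyadic_exp d2 < real (dyadic_num d2) * 2 ^ dyadic_exp d1"
    by simp
  also have "\<dots> \<longleftrightarrow> real (dyadic_num d1) / 2 ^ dyadic_exp d1 < real (dyadic_num d2) / 2 ^ dyadic_exp d2"
    by (simp add: divide_less_eq less_divide_eq mult.commute mult.left_commute)
  finally show ?thesis .
qed

lemma dyadic_less_irrefl: "\<not> dyadic_less d d"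
  unfolding dyadic_less_def by auto

lemma not_dyadic_less_0: "\<not> dyadic_less 0 d"
  unfolding dyadic_less_def by simp

lemma dyadic_less_trans: "dyadic_less a b \<Longrightarrow> dyadic_less b c \<Longrightarrow> dyadic_less a c"
proof -
  assume ab: "dyadic_less a b" and bc: "dyadic_less b c"
  then have a: "a \<noteq> 0" and b: "b \<noteq> 0" unfolding dyadic_less_def by auto
  show "dyadic_less a c"
  proof (cases "c = 0")
    case True
    then show ?thesis using a by (simp add: dyadic_less_def)
  next
    case False
    then show ?thesis
      using ab bc dyadic_less_iff_real[OF a b] dyadic_less_iff_real[OF b False]
        dyadic_less_iff_real[OF a False] by linarith
  qed
qed

lemma odd_mult_power2_eq:
  fixes a b x y :: nat
  assumes "odd a" "odd b" "a * 2 ^ x = b * 2 ^ y"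
  shows "x = y \<and> a = b"
proof -
  have "x = y"
  proof (rule ccontr)
    assume "x \<noteq> y"
    then have "x < y \<or> y < x" by linarith
    then show False
    proof
      assume "x < y"
      then have "a * 2 ^ x = (b * 2 ^ (y - x)) * 2 ^ x"
        using assms(3) by (simp add: power_add[symmetric])
      then have "a = b * 2 ^ (y - x)" by simp
      then show False using \<open>x < y\<close> assms(1) by simp
    next
      assume "y < x"
      then have "b * 2 ^ y = (a * 2 ^ (x - y)) * 2 ^ y"
        using assms(3)[symmetric] by (simp add: power_add[symmetric])
      then have "b = a * 2 ^ (x - y)" by simp
      then show False using \<open>y < x\<close> assms(2) by simp
    qed
  qed
  with assms(3) show ?thesis by simp
qed

lemma dyadic_less_linear: "d1 \<noteq> d2 \<Longrightarrow> dyadic_less d1 d2 \<or> dyadic_less d2 d1"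
proof (cases "d1 = 0 \<or> d2 = 0")
  case False
  assume ne: "d1 \<noteq> d2"
  have "dyadic_num d1 * 2 ^ dyadic_exp d2 \<noteq> dyadic_num d2 * 2 ^ dyadic_exp d1"
  proof
    assume "dyadic_num d1 * 2 ^ dyadic_exp d2 = dyadic_num d2 * 2 ^ dyadic_exp d1"
    then have "dyadic_exp d2 = dyadic_exp d1 \<and> dyadic_num d1 = dyadic_num d2"
      by (intro odd_mult_power2_eq) (simp_all add: dyadic_num_def)
    then have "prod_decode (d1 - 1) = prod_decode (d2 - 1)"
      unfolding dyadic_exp_def dyadic_num_def by (simp add: prod_eq_iff)
    then have "d1 - 1 = d2 - 1" by simp
    then show False using False ne by linarith
  qed
  then show ?thesis using False unfolding dyadic_less_def by auto
qed (auto simp: dyadic_less_def)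

lemma ex_dyadic_less: "\<exists>d'. dyadic_less d' d"
proof (cases "d = 0")
  case True
  then show ?thesis by (intro exI[of _ "dyadic_code 0 0"]) (simp add: dyadic_less_def)
next
  case False
  then have "dyadic_less (dyadic_code (fst (prod_decode (d - 1))) (dyadic_exp d + 1)) d"
    unfolding dyadic_less_def by (simp add: dyadic_num_def dyadic_exp_def dyadic_code_def)
  then show ?thesis ..
qed

lemma dyadic_less_dense: "dyadic_less d1 d2 \<Longrightarrow> \<exists>d. dyadic_less d1 d \<and> dyadic_less d d2"
proof -
  assume h: "dyadic_less d1 d2"
  then have d1: "d1 \<noteq> 0" unfolding dyadic_less_def by simp
  show ?thesis
  proof (cases "d2 = 0")
    case True
    let ?d = "dyadic_code (fst (prod_decode (d1 - 1)) + 2 ^ dyadic_exp d1) (dyadic_exp d1)"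
    have "dyadic_num d1 * 2 ^ dyadic_exp d1 < dyadic_num ?d * 2 ^ dyadic_exp d1"
      by (simp add: dyadic_num_def dyadic_code_def)
    then show ?thesis using True d1 by (intro exI[of _ ?d]) (simp add: dyadic_less_def)
  next
    case False
    define w where "w = dyadic_num d1 * 2 ^ dyadic_exp d2"
    define w2 where "w2 = dyadic_num d2 * 2 ^ dyadic_exp d1"
    have "w < w2" using h False unfolding dyadic_less_def w_def w2_def by simp
    let ?d = "dyadic_code w (dyadic_exp d1 + dyadic_exp d2 + 1)"
    have "dyadic_num d1 * 2 ^ (dyadic_exp d1 + dyadic_exp d2 + 1) = 2 * w * 2 ^ dyadic_exp d1"
      unfolding w_def by (simp add: power_add)
    also have "\<dots> < (2 * w + 1) * 2 ^ dyadic_exp d1" by simp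
    finally have below: "dyadic_num d1 * 2 ^ dyadic_exp ?d < dyadic_num ?d * 2 ^ dyadic_exp d1"
      by simp
    have "(2 * w + 1) * 2 ^ dyadic_exp d2 < (2 * w2) * 2 ^ dyadic_exp d2"
      using \<open>w < w2\<close> by (intro mult_strict_right_mono) simp_all
    also have "\<dots> = dyadic_num d2 * 2 ^ (dyadic_exp d1 + dyadic_exp d2 + 1)"
      unfolding w2_def by (simp add: power_add)
    finally have above: "dyadic_num ?d * 2 ^ dyadic_exp d2 < dyadic_num d2 * 2 ^ dyadic_exp ?d"
      by simp
    show ?thesis using below above d1 False by (intro exI[of _ ?d]) (simp add: dyadic_less_def)
  qed
qed

section \<open>The coded order\<close>

text \<open>A point \<open>\<langle>c, y, d\<rangle>\<close> lies in component \<open>c\<close>; for odd \<open>y = 2b + 1\<close> it is a branch point on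
  branch \<open>min b (c + 1)\<close>, for even \<open>y = 2b\<close> a main point in block \<open>b\<close>.  Within component \<open>c\<close> the
  \<open>c + 2\<close> branches are pairwise incomparable chains lying below every main point, and the main
  points form a chain of blocks, each a copy of the payload order.\<close>

definition pt :: "nat \<Rightarrow> nat \<Rightarrow> nat \<Rightarrow> nat" where
  "pt c y d = prod_encode (c, prod_encode (y, d))"

definition component :: "nat \<Rightarrow> nat" where
  "component i = fst (prod_decode i)"

definition ycoord :: "nat \<Rightarrow> nat" where
  "ycoord i = fst (prod_decode (snd (prod_decode i)))"

definition payload :: "nat \<Rightarrow> nat" where
  "payload i = snd (prod_decode (snd (prod_decode i)))"

definition on_branch :: "nat \<Rightarrow> bool" where
  "on_branch i \<longleftrightarrow> odd (ycoord i)"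

definition level :: "nat \<Rightarrow> nat" where
  "level i = ycoord i div 2"

lemma pt_simps [simp]:
  "component (pt c y d) = c" "ycoord (pt c y d) = y" "payload (pt c y d) = d"
  "on_branch (pt c y d) \<longleftrightarrow> odd y" "level (pt c y d) = y div 2"
  unfolding pt_def component_def ycoord_def payload_def on_branch_def level_def by simp_all

lemma pt_component_ycoord_payload: "pt (component i) (ycoord i) (payload i) = i"
  unfolding pt_def component_def ycoord_def payload_def by simp

lemma point_eqI:
  assumes "component i = component j" "level i = level j" "on_branch i = on_branch j" "payload i = payload j"
  shows "i = j"
proof -
  have "ycoord i = ycoord j"
    using assms(2,3) unfolding level_def on_branch_def by (metis dvd_mult_div_cancel odd_two_times_div_two_succ)
  then show ?thesis using assms(1,4) pt_component_ycoord_payload by metis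
qed

text \<open>Block \<open>0\<close> is in the middle; block \<open>s + 1\<close> is placed above it if \<open>\<phi> s\<close> and below it otherwise,
  the blocks above increasing and the blocks below decreasing with \<open>s\<close>.  So there is a greatest
  block iff \<open>\<phi>\<close> holds only finitely often.\<close>

definition block_class :: "(nat \<Rightarrow> bool) \<Rightarrow> nat \<Rightarrow> nat" where
  "block_class \<phi> x = (if x = 0 then 1 else if \<phi> (x - 1) then 2 else 0)"

definition block_less :: "(nat \<Rightarrow> bool) \<Rightarrow> nat \<Rightarrow> nat \<Rightarrow> bool" where
  "block_less \<phi> x1 x2 \<longleftrightarrow> block_class \<phi> x1 < block_class \<phi> x2
     \<or> (block_class \<phi> x1 = 2 \<and> block_class \<phi> x2 = 2 \<and> x1 < x2)
     \<or> (block_class \<phi> x1 = 0 \<and> block_class \<phi> x2 = 0 \<and> x2 < x1)"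

lemma block_less_irrefl: "\<not> block_less \<phi> x x"
  unfolding block_less_def by auto

lemma block_less_trans: "block_less \<phi> x y \<Longrightarrow> block_less \<phi> y z \<Longrightarrow> block_less \<phi> x z"
  unfolding block_less_def by auto

lemma block_less_linear: "x \<noteq> y \<Longrightarrow> block_less \<phi> x y \<or> block_less \<phi> y x"
  unfolding block_less_def block_class_def by (auto split: if_splits)

text \<open>In component \<open>c\<close> the blocks are arranged according to \<open>F c\<close>, a sequence of approximations
  to a bit attached to \<open>c\<close>.\<close>

definition coded_order :: "(nat \<Rightarrow> nat \<Rightarrow> bool) \<Rightarrow> nat \<Rightarrow> nat \<Rightarrow> bool" where
  "coded_order F i j \<longleftrightarrow> component i = component j \<and>
     ((on_branch i \<and> on_branch j \<and> min (level i) (component i + 1) = min (level j) (component j + 1)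
          \<and> (level i < level j \<or> (level i = level j \<and> dyadic_less (payload i) (payload j))))
    \<or> (on_branch i \<and> \<not> on_branch j)
    \<or> (\<not> on_branch i \<and> \<not> on_branch j \<and> (block_less (F (component i)) (level i) (level j)
          \<or> (level i = level j \<and> dyadic_less (payload i) (payload j)))))"

lemma coded_order_irrefl: "\<not> coded_order F i i"
  unfolding coded_order_def using dyadic_less_irrefl block_less_irrefl by auto

lemma coded_order_trans: "coded_order F i j \<Longrightarrow> coded_order F j k \<Longrightarrow> coded_order F i k"
  unfolding coded_order_def using dyadic_less_trans block_less_trans by (smt (verit) order.strict_trans)

lemma main_points_comparable:
  assumes "component i = component j" "\<not> on_branch i" "\<not> on_branch j" "i \<noteq> j"
  shows "coded_order F i j \<or> coded_order F j i"
proof (cases "level i = level j")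
  case True
  then have "payload i \<noteq> payload j" using assms point_eqI by blast
  then consider "dyadic_less (payload i) (payload j)" | "dyadic_less (payload j) (payload i)"
    using dyadic_less_linear by blast
  then show ?thesis using assms True unfolding coded_order_def by cases simp_all
next
  case False
  then consider "block_less (F (component i)) (level i) (level j)"
    | "block_less (F (component i)) (level j) (level i)"
    using block_less_linear by blast
  then show ?thesis using assms unfolding coded_order_def by cases simp_all
qed

lemma branch_points_comparable:
  assumes "component i = component j" "on_branch i" "on_branch j"
    and "min (level i) (component i + 1) = min (level j) (component j + 1)" "i \<noteq> j"
  shows "coded_order F i j \<or> coded_order F j i"
proof (cases "level i = level j")
  case True
  then have "payload i \<noteq> payload j" using assms point_eqI by blast
  then consider "dyadic_less (payload i) (payload j)" | "dyadic_less (payload j) (payload i)"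
    using dyadic_less_linear by blast
  then show ?thesis using assms True unfolding coded_order_def by cases simp_all
next
  case False
  then consider "level i < level j" | "level j < level i" by linarith
  then show ?thesis using assms unfolding coded_order_def by cases simp_all
qed

lemma coded_order_dense: "coded_order F x y \<Longrightarrow> \<exists>w. coded_order F x w \<and> coded_order F w y"
proof -
  assume xy: "coded_order F x y"
  show ?thesis
  proof (cases "level x = level y \<and> on_branch x = on_branch y")
    case True
    then have "dyadic_less (payload x) (payload y)"
      using xy block_less_irrefl unfolding coded_order_def by auto
    then obtain d where "dyadic_less (payload x) d" "dyadic_less d (payload y)"
      using dyadic_less_dense by blast
    then have "coded_order F x (pt (component y) (ycoord y) d)" "coded_order F (pt (component y) (ycoord y) d) y"
      using xy True unfolding coded_order_def by (auto simp: on_branch_def level_def)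
    then show ?thesis by blast
  next
    case False
    obtain d where "dyadic_less d (payload y)" using ex_dyadic_less by blast
    then have "coded_order F x (pt (component y) (ycoord y) d)" "coded_order F (pt (component y) (ycoord y) d) y"
      using xy False unfolding coded_order_def by (auto simp: on_branch_def level_def)
    then show ?thesis by blast
  qed
qed

lemma ex_coded_order_below: "\<exists>x. coded_order F x y"
proof (cases "on_branch y")
  case True
  obtain d where "dyadic_less d (payload y)" using ex_dyadic_less by blast
  then have "coded_order F (pt (component y) (ycoord y) d) y"
    using True unfolding coded_order_def by (simp add: on_branch_def level_def)
  then show ?thesis by blast
next
  case False
  then have "coded_order F (pt (component y) 1 0) y"
    unfolding coded_order_def by simp
  then show ?thesis by blast
qed

lemma coded_order_upper_bound:
  assumes xy: "coded_order F x y" and zy: "coded_order F z y"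
  shows "\<exists>u. coded_order F u y \<and> (x = u \<or> coded_order F x u) \<and> (z = u \<or> coded_order F z u)"
proof (cases "on_branch x \<and> on_branch z \<and> \<not> on_branch y")
  case True
  obtain d where "dyadic_less d (payload y)" using ex_dyadic_less by blast
  then have "coded_order F (pt (component y) (ycoord y) d) y"
    "coded_order F x (pt (component y) (ycoord y) d)" "coded_order F z (pt (component y) (ycoord y) d)"
    using True xy zy unfolding coded_order_def by (auto simp: on_branch_def level_def)
  then show ?thesis by blast
next
  case False
  have xz: "component x = component z" using xy zy unfolding coded_order_def by simp
  consider "on_branch x" "on_branch z" "on_branch y" | "on_branch x \<noteq> on_branch z"
    | "\<not> on_branch x" "\<not> on_branch z"
    using False by blast
  then have "x = z \<or> coded_order F x z \<or> coded_order F z x"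
  proof cases
    case 1
    then have "min (level x) (component x + 1) = min (level z) (component z + 1)"
      using xy zy unfolding coded_order_def by auto
    then show ?thesis using 1 xz branch_points_comparable by blast
  next
    case 2
    then show ?thesis using xz unfolding coded_order_def by auto
  next
    case 3
    then show ?thesis using xz main_points_comparable by blast
  qed
  then show ?thesis using xy zy by blast
qed

lemma irreflexive_coded_order: "irreflexive_rel (coded_order F)"
  unfolding irreflexive_rel_def using coded_order_irrefl by blast

lemma interpolable_coded_order: "interpolable (coded_order F)"
  unfolding interpolable_def transitive_rel_def
proof (intro conjI allI impI)
  show "coded_order F x y \<Longrightarrow> coded_order F y z \<Longrightarrow> coded_order F x z" for x y z
    by (rule coded_order_trans)
  show "\<exists>x. coded_order F x y" for y
    by (rule ex_coded_order_below)
  fix y x z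
  assume "coded_order F x y" "coded_order F z y"
  then obtain u where u: "coded_order F u y" "x = u \<or> coded_order F x u" "z = u \<or> coded_order F z u"
    using coded_order_upper_bound by blast
  from coded_order_dense[OF u(1)] obtain w where "coded_order F u w" "coded_order F w y"
    by blast
  with u show "\<exists>w. coded_order F w y \<and> coded_order F x w \<and> coded_order F z w"
    by (meson coded_order_trans)
qed

section \<open>The isomorphism type depends only on the limit\<close>

fun count_below :: "(nat \<Rightarrow> bool) \<Rightarrow> nat \<Rightarrow> nat" where
  "count_below \<phi> 0 = 0"
| "count_below \<phi> (Suc s) = count_below \<phi> s + (if \<phi> s then 1 else 0)"

lemma count_below_mono: "s \<le> t \<Longrightarrow> count_below \<phi> s \<le> count_below \<phi> t"
  by (induction t) (auto simp: le_Suc_eq)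

lemma count_below_strict_mono: "s < t \<Longrightarrow> \<phi> s \<Longrightarrow> count_below \<phi> s < count_below \<phi> t"
  using count_below_mono[of "Suc s" t \<phi>] by simp

lemma count_below_less_iff: "\<phi> a \<Longrightarrow> \<phi> b \<Longrightarrow> count_below \<phi> a < count_below \<phi> b \<longleftrightarrow> a < b"
  by (meson count_below_mono count_below_strict_mono not_le)

lemma count_below_attained: "k < count_below \<phi> s \<Longrightarrow> \<exists>s'<s. \<phi> s' \<and> count_below \<phi> s' = k"
proof (induction s)
  case (Suc s)
  then show ?case
    by (cases "k < count_below \<phi> s") (auto simp: less_Suc_eq split: if_splits)
qed simp

lemma count_below_eventually_true: "(\<forall>s\<ge>s0. \<phi> s) \<Longrightarrow> count_below \<phi> (s0 + k) = count_below \<phi> s0 + k"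
  by (induction k) auto

text \<open>Blocks above the middle are numbered \<open>1, 2, \<dots>\<close> upwards, blocks below it \<open>-1, -2, \<dots>\<close>
  downwards.\<close>

definition block_pos :: "(nat \<Rightarrow> bool) \<Rightarrow> nat \<Rightarrow> int" where
  "block_pos \<phi> x = (if x = 0 then 0 else if \<phi> (x - 1) then 1 + int (count_below \<phi> (x - 1))
     else - 1 - int (count_below (\<lambda>s. \<not> \<phi> s) (x - 1)))"

lemma block_less_iff_block_pos: "block_less \<phi> x1 x2 \<longleftrightarrow> block_pos \<phi> x1 < block_pos \<phi> x2"
proof (cases "x1 = 0 \<or> x2 = 0")
  case True
  then show ?thesis unfolding block_less_def block_class_def block_pos_def by auto
next
  case False
  then obtain s1 s2 where s: "x1 = Suc s1" "x2 = Suc s2" by (metis not0_implies_Suc)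
  have "count_below \<phi> s1 < count_below \<phi> s2 \<longleftrightarrow> s1 < s2" if "\<phi> s1" "\<phi> s2"
    using that by (rule count_below_less_iff)
  moreover have "count_below (\<lambda>s. \<not> \<phi> s) s2 < count_below (\<lambda>s. \<not> \<phi> s) s1 \<longleftrightarrow> s2 < s1"
    if "\<not> \<phi> s1" "\<not> \<phi> s2"
    using that by (intro count_below_less_iff)
  ultimately show ?thesis
    unfolding block_less_def block_class_def block_pos_def s by auto
qed

lemma block_pos_inj: "block_pos \<phi> x1 = block_pos \<phi> x2 \<Longrightarrow> x1 = x2"
  using block_less_linear block_less_iff_block_pos by (metis less_irrefl)

lemma block_pos_Not: "block_pos (\<lambda>s. \<not> \<phi> s) x = - block_pos \<phi> x"
  unfolding block_pos_def by simp

lemma range_block_pos_eventually_false: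
  assumes ev: "\<forall>s\<ge>s0. \<not> \<phi> s"
  shows "range (block_pos \<phi>) = {m. m \<le> int (count_below \<phi> s0)}"
proof (intro equalityI subsetI)
  fix m
  assume "m \<in> range (block_pos \<phi>)"
  then obtain x where m: "m = block_pos \<phi> x" by blast
  show "m \<in> {m. m \<le> int (count_below \<phi> s0)}"
  proof (cases "x \<noteq> 0 \<and> \<phi> (x - 1)")
    case True
    then have "count_below \<phi> (x - 1) < count_below \<phi> s0"
      using ev count_below_strict_mono by (meson not_le)
    then show ?thesis using m True unfolding block_pos_def by simp
  qed (use m in \<open>auto simp: block_pos_def\<close>)
next
  fix m
  assume m: "m \<in> {m. m \<le> int (count_below \<phi> s0)}"
  consider "m = 0" | "m > 0" | "m < 0" by linarith
  then show "m \<in> range (block_pos \<phi>)"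
  proof cases
    case 1
    then show ?thesis by (intro range_eqI[of _ _ 0]) (simp add: block_pos_def)
  next
    case 2
    then have "nat (m - 1) < count_below \<phi> s0" using m by simp
    then obtain s where "\<phi> s" "count_below \<phi> s = nat (m - 1)"
      using count_below_attained by blast
    then have "block_pos \<phi> (Suc s) = m" using 2 unfolding block_pos_def by simp
    then show ?thesis by (metis rangeI)
  next
    case 3
    have "nat (- m - 1) < count_below (\<lambda>s. \<not> \<phi> s) (s0 + Suc (nat (- m - 1)))"
      using count_below_eventually_true[of s0 "\<lambda>s. \<not> \<phi> s"] ev by simp
    then obtain s where "\<not> \<phi> s" "count_below (\<lambda>s. \<not> \<phi> s) s = nat (- m - 1)"
      using count_below_attained by blast
    then have "block_pos \<phi> (Suc s) = m" using 3 unfolding block_pos_def by simp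
    then show ?thesis by (metis rangeI)
  qed
qed

lemma block_less_iso_if_shift:
  assumes shift: "\<And>m. m \<in> range (block_pos \<phi>) \<longleftrightarrow> m + t \<in> range (block_pos \<psi>)"
  shows "\<exists>\<beta>. bij \<beta> \<and> (\<forall>x1 x2. block_less \<phi> x1 x2 \<longleftrightarrow> block_less \<psi> (\<beta> x1) (\<beta> x2))"
proof -
  define \<beta> where "\<beta> x = (SOME y. block_pos \<psi> y = block_pos \<phi> x + t)" for x
  have "block_pos \<phi> x + t \<in> range (block_pos \<psi>)" for x
    using shift[of "block_pos \<phi> x"] by blast
  then have pos: "block_pos \<psi> (\<beta> x) = block_pos \<phi> x + t" for x
    unfolding \<beta>_def by (metis (mono_tags) rangeE someI_ex)
  have "inj \<beta>"
    by (rule injI) (metis pos add_right_cancel block_pos_inj)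
  moreover have "surj \<beta>"
  proof -
    have "\<exists>x. y = \<beta> x" for y
    proof -
      obtain x where "block_pos \<phi> x = block_pos \<psi> y - t"
        using shift[of "block_pos \<psi> y - t"] by auto
      then have "block_pos \<psi> (\<beta> x) = block_pos \<psi> y" using pos by simp
      then show ?thesis using block_pos_inj by metis
    qed
    then show ?thesis unfolding surj_def by blast
  qed
  ultimately have "bij \<beta>" by (rule bijI)
  moreover have "block_less \<phi> x1 x2 \<longleftrightarrow> block_less \<psi> (\<beta> x1) (\<beta> x2)" for x1 x2
    unfolding block_less_iff_block_pos pos by simp
  ultimately show ?thesis by blast
qed

lemma block_less_Not: "block_less (\<lambda>s. \<not> \<phi> s) x1 x2 \<longleftrightarrow> block_less \<phi> x2 x1"
  unfolding block_less_iff_block_pos block_pos_Not by simp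

lemma block_less_iso_eventually_false:
  assumes "\<forall>s\<ge>s0. \<not> \<phi> s"
  shows "\<exists>\<beta>. bij \<beta> \<and> (\<forall>x1 x2. block_less \<phi> x1 x2 \<longleftrightarrow> block_less (\<lambda>s. False) (\<beta> x1) (\<beta> x2))"
proof (rule block_less_iso_if_shift)
  show "m \<in> range (block_pos \<phi>) \<longleftrightarrow> m + - int (count_below \<phi> s0) \<in> range (block_pos (\<lambda>s. False))"
    for m
    using range_block_pos_eventually_false[OF assms] range_block_pos_eventually_false[of 0 "\<lambda>s. False"]
    by simp
qed

lemma block_less_iso_limit:
  assumes "\<exists>s0. \<forall>s\<ge>s0. \<phi> s = b"
  shows "\<exists>\<beta>. bij \<beta> \<and> (\<forall>x1 x2. block_less \<phi> x1 x2 \<longleftrightarrow> block_less (\<lambda>s. b) (\<beta> x1) (\<beta> x2))"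
proof (cases b)
  case False
  then show ?thesis using assms block_less_iso_eventually_false by (metis (full_types))
next
  case True
  with assms obtain s0 where "\<forall>s\<ge>s0. \<not> (\<not> \<phi> s)" by auto
  from block_less_iso_eventually_false[OF this] obtain \<beta> where "bij \<beta>"
    and "\<forall>x1 x2. block_less (\<lambda>s. \<not> \<phi> s) x1 x2 \<longleftrightarrow> block_less (\<lambda>s. False) (\<beta> x1) (\<beta> x2)"
    by blast
  then show ?thesis
    using block_less_Not[of "\<lambda>s. False"] True by (auto simp: block_less_Not)
qed

lemma ycoord_main_point: "\<not> on_branch i \<Longrightarrow> ycoord i = 2 * level i"
  unfolding on_branch_def level_def by simp

text \<open>The isomorphism fixes the branch points and moves a main point of component \<open>c\<close> in block \<open>b\<close>
  to block \<open>B c b\<close>, keeping its payload.\<close>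

lemma coded_order_relabel_blocks:
  assumes B: "\<And>c. bij (B c)"
    and B_less: "\<And>c x1 x2. block_less (F c) x1 x2 \<longleftrightarrow> block_less (G c) (B c x1) (B c x2)"
  shows "rel_isomorphic (coded_order F) (coded_order G)"
proof -
  define relabel where "relabel R i = (if on_branch i then i else pt (component i) (2 * R (component i) (level i)) (payload i))"
    for R :: "nat \<Rightarrow> nat \<Rightarrow> nat" and i
  have relabel_simps: "component (relabel R i) = component i" "on_branch (relabel R i) = on_branch i"
    "payload (relabel R i) = payload i" "level (relabel R i) = (if on_branch i then level i else R (component i) (level i))"
    for R i
    unfolding relabel_def by simp_all
  have inverse: "relabel R (relabel R' i) = i" if "\<And>c x. R c (R' c x) = x" for R R' i
    using that ycoord_main_point[of i] pt_component_ycoord_payload[of i]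
    by (cases "on_branch i") (simp_all add: relabel_def)
  let ?f = "relabel B" and ?g = "relabel (\<lambda>c. inv (B c))"
  have "bij ?f"
    using inverse[of "\<lambda>c. inv (B c)" B] inverse[of B "\<lambda>c. inv (B c)"] B
    by (intro o_bij[of ?g]) (auto simp: bij_is_inj bij_is_surj surj_f_inv_f)
  moreover have "coded_order F i j \<longleftrightarrow> coded_order G (?f i) (?f j)" for i j
    using B_less bij_is_inj[OF B] unfolding coded_order_def relabel_simps
    by (auto simp: inj_eq)
  ultimately show ?thesis unfolding rel_isomorphic_def by blast
qed

lemma coded_order_iso_limit:
  assumes "\<And>c. \<exists>s0. \<forall>s\<ge>s0. F c s = G c"
  shows "rel_isomorphic (coded_order F) (coded_order (\<lambda>c s. G c))"
proof -
  have "\<forall>c. \<exists>\<beta>. bij \<beta> \<and> (\<forall>x1 x2. block_less (F c) x1 x2 \<longleftrightarrow> block_less (\<lambda>s. G c) (\<beta> x1) (\<beta> x2))"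
    using assms by (blast intro: block_less_iso_limit)
  then obtain B where "\<And>c. bij (B c)"
    "\<And>c x1 x2. block_less (F c) x1 x2 \<longleftrightarrow> block_less (\<lambda>s. G c) (B c x1) (B c x2)"
    by metis
  then show ?thesis by (rule coded_order_relabel_blocks)
qed

section \<open>Recovering the limit from the isomorphism type\<close>

definition antichain_below :: "(nat \<Rightarrow> nat \<Rightarrow> bool) \<Rightarrow> nat \<Rightarrow> nat list \<Rightarrow> bool" where
  "antichain_below R t as \<longleftrightarrow> distinct as \<and> (\<forall>a\<in>set as. R a t) \<and> (\<forall>a\<in>set as. \<forall>b\<in>set as. \<not> R a b)"

definition maximal_of_width :: "(nat \<Rightarrow> nat \<Rightarrow> bool) \<Rightarrow> nat \<Rightarrow> nat \<Rightarrow> bool" where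
  "maximal_of_width R L t \<longleftrightarrow> (\<forall>u. \<not> R t u)
     \<and> (\<exists>as. antichain_below R t as \<and> length as = L + 2)
     \<and> \<not> (\<exists>as. antichain_below R t as \<and> length as = L + 3)"

lemma ex_maximal_of_width_iso:
  assumes "rel_isomorphic Q R"
  shows "(\<exists>t. maximal_of_width Q L t) \<longleftrightarrow> (\<exists>t. maximal_of_width R L t)"
proof -
  from assms obtain f where f: "bij f" and QR: "\<And>x y. Q x y \<longleftrightarrow> R (f x) (f y)"
    unfolding rel_isomorphic_def by blast
  have inv: "f (inv f y) = y" for y
    using f by (simp add: bij_is_surj surj_f_inv_f)
  have antichain: "antichain_below Q t as \<longleftrightarrow> antichain_below R (f t) (map f as)" for t as
    unfolding antichain_below_def using QR bij_is_inj[OF f] by (auto simp: distinct_map inj_on_def)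
  have "(\<exists>as. antichain_below Q t as \<and> length as = k) \<longleftrightarrow> (\<exists>bs. antichain_below R (f t) bs \<and> length bs = k)"
    for t k
  proof
    assume "\<exists>bs. antichain_below R (f t) bs \<and> length bs = k"
    then obtain bs where "antichain_below R (f t) bs" "length bs = k" by blast
    moreover have "map f (map (inv f) bs) = bs" by (simp add: inv map_idI)
    ultimately show "\<exists>as. antichain_below Q t as \<and> length as = k"
      using antichain[of t "map (inv f) bs"] by (intro exI[of _ "map (inv f) bs"]) simp
  qed (use antichain in \<open>metis length_map\<close>)
  moreover have "(\<forall>u. \<not> Q t u) \<longleftrightarrow> (\<forall>u. \<not> R (f t) u)" for t
    using QR inv by metis
  ultimately have "maximal_of_width Q L t \<longleftrightarrow> maximal_of_width R L (f t)" for t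
    unfolding maximal_of_width_def by simp
  then show ?thesis using inv by metis
qed

lemma antichain_below_main_point:
  assumes "\<not> on_branch t" "k \<le> component t + 2"
  shows "\<exists>as. antichain_below (coded_order F) t as \<and> length as = k"
proof -
  define as where "as = map (\<lambda>b. pt (component t) (2 * b + 1) 0) [0..<k]"
  have "distinct as" unfolding as_def by (simp add: distinct_map inj_on_def pt_def)
  moreover have "\<forall>a\<in>set as. coded_order F a t"
    unfolding as_def coded_order_def using assms(1) by auto
  moreover have "\<not> coded_order F a b" if "a \<in> set as" "b \<in> set as" for a b
  proof -
    from that obtain x y where "x < k" "y < k" "a = pt (component t) (2 * x + 1) 0"
      "b = pt (component t) (2 * y + 1) 0"
      unfolding as_def by auto
    then show ?thesis using assms(2) unfolding coded_order_def by (auto simp: not_dyadic_less_0)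
  qed
  ultimately have "antichain_below (coded_order F) t as"
    unfolding antichain_below_def by blast
  moreover have "length as = k" by (simp add: as_def)
  ultimately show ?thesis by blast
qed

lemma antichain_below_with_main_point:
  assumes as: "antichain_below (coded_order F) t as" and a: "a \<in> set as" "\<not> on_branch a"
  shows "set as = {a}"
proof -
  have "b = a" if b: "b \<in> set as" for b
  proof (rule ccontr)
    assume "b \<noteq> a"
    have "coded_order F a t" "coded_order F b t"
      and ab: "\<not> coded_order F a b" "\<not> coded_order F b a"
      using a(1) b as unfolding antichain_below_def by auto
    then have same: "component a = component b" unfolding coded_order_def by simp
    show False
    proof (cases "on_branch b")
      case True
      then have "coded_order F b a" using same a(2) unfolding coded_order_def by simp
      then show False using ab by blast
    next
      case False
      then show False using main_points_comparable[OF same a(2) False] \<open>b \<noteq> a\<close> ab by blast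
    qed
  qed
  then show ?thesis using a(1) by blast
qed

lemma antichain_below_branch_points:
  assumes as: "antichain_below (coded_order F) t as" and branch: "\<forall>a\<in>set as. on_branch a"
  shows "length as \<le> component t + 2"
proof -
  have "\<forall>a\<in>set as. coded_order F a t"
    using as unfolding antichain_below_def by blast
  then have same_component: "\<forall>a\<in>set as. component a = component t"
    unfolding coded_order_def by blast
  define branch_of where "branch_of a = min (level a) (component t + 1)" for a
  have "inj_on branch_of (set as)"
  proof (rule inj_onI)
    fix a b
    assume ab: "a \<in> set as" "b \<in> set as" "branch_of a = branch_of b"
    show "a = b"
    proof (rule ccontr)
      assume "a \<noteq> b"
      then have "coded_order F a b \<or> coded_order F b a"
        using ab branch same_component by (intro branch_points_comparable) (auto simp: branch_of_def)
      then show False using ab as unfolding antichain_below_def by auto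
    qed
  qed
  moreover have "branch_of ` set as \<subseteq> {..component t + 1}" unfolding branch_of_def by auto
  ultimately have "card (set as) \<le> card {..component t + 1}"
    by (metis card_image card_mono finite_atMost)
  then show ?thesis using as unfolding antichain_below_def by (simp add: distinct_card)
qed

lemma length_antichain_below_main_point:
  assumes "\<not> on_branch t" "antichain_below (coded_order F) t as"
  shows "length as \<le> component t + 2"
proof (cases "\<forall>a\<in>set as. on_branch a")
  case False
  then obtain a where "a \<in> set as" "\<not> on_branch a" by blast
  then have "set as = {a}" using assms(2) by (rule antichain_below_with_main_point[rotated])
  then show ?thesis
    using assms(2) distinct_card[of as] unfolding antichain_below_def by simp
qed (use assms(2) antichain_below_branch_points in blast)

lemma maximal_of_width_coded_order_limit:
  assumes t: "maximal_of_width (coded_order (\<lambda>c s. G c)) L t"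
  shows "L = component t \<and> \<not> G L"
proof -
  have maximal: "\<forall>u. \<not> coded_order (\<lambda>c s. G c) t u"
    using t unfolding maximal_of_width_def by blast
  then have main: "\<not> on_branch t"
    using maximal[rule_format, of "pt (component t) 0 0"] unfolding coded_order_def by auto
  have "\<not> G (component t)"
  proof
    assume "G (component t)"
    then have "block_less (\<lambda>s. G (component t)) (level t) (level t + 1)"
      unfolding block_less_def block_class_def by auto
    then show False
      using maximal[rule_format, of "pt (component t) (2 * (level t + 1)) 0"] main
      unfolding coded_order_def by simp
  qed
  moreover have "L = component t"
  proof -
    from t obtain as where "antichain_below (coded_order (\<lambda>c s. G c)) t as" "length as = L + 2"
      unfolding maximal_of_width_def by blast
    then have "L \<le> component t"
      using length_antichain_below_main_point[OF main] by fastforce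
    moreover have "\<not> L + 3 \<le> component t + 2"
      using t antichain_below_main_point[OF main] unfolding maximal_of_width_def by blast
    ultimately show ?thesis by linarith
  qed
  ultimately show ?thesis by simp
qed

lemma maximal_of_width_coded_order_pt:
  assumes "\<not> G L"
  shows "maximal_of_width (coded_order (\<lambda>c s. G c)) L (pt L 0 0)"
proof -
  have "\<not> coded_order (\<lambda>c s. G c) (pt L 0 0) u" for u
  proof -
    have "\<not> block_less (\<lambda>s. G L) 0 (level u)"
      using assms unfolding block_less_def block_class_def by auto
    then show ?thesis unfolding coded_order_def by (auto simp: not_dyadic_less_0)
  qed
  moreover have "\<not> (\<exists>as. antichain_below (coded_order (\<lambda>c s. G c)) (pt L 0 0) as \<and> length as = L + 3)"
    using length_antichain_below_main_point[of "pt L 0 0"] by fastforce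
  ultimately show ?thesis
    using antichain_below_main_point[of "pt L 0 0"] unfolding maximal_of_width_def by auto
qed

lemma ex_maximal_of_width_coded_order:
  "(\<exists>t. maximal_of_width (coded_order (\<lambda>c s. G c)) L t) \<longleftrightarrow> \<not> G L"
  by (metis maximal_of_width_coded_order_limit maximal_of_width_coded_order_pt)

section \<open>Computable copies and the jump\<close>

lemma rel_computable_in_iff_decidable:
  "rel_computable_in X Q \<longleftrightarrow> decidable X (\<lambda>z. Q (fst (prod_decode z)) (snd (prod_decode z)))"
  unfolding rel_computable_in_def decidable_def computable_def
  by (metis fst_conv prod.collapse prod_decode_inverse prod_encode_inverse snd_conv)

lemma decidable_coded_order:
  assumes F: "decidable X (\<lambda>z. F (fst (prod_decode z)) (snd (prod_decode z)))"
    and "computable X f" "computable X g"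
  shows "decidable X (\<lambda>x. coded_order F (f x) (g x))"
  unfolding coded_order_def block_less_def block_class_def dyadic_less_def on_branch_def level_def
    component_def ycoord_def payload_def dyadic_num_def dyadic_exp_def odd_iff_mod_2_eq_one min_def
  by (intro computable_intros decidable_app2[OF F] assms computable_pred)

lemma antichain_below_list_decode_iff:
  "antichain_below Q t (list_decode c) \<longleftrightarrow>
     (\<forall>i<c. \<forall>j<c. (tl_num ^^ i) c \<noteq> 0 \<longrightarrow> (tl_num ^^ j) c \<noteq> 0 \<longrightarrow>
        (i \<noteq> j \<longrightarrow> nth_num c i \<noteq> nth_num c j) \<and> \<not> Q (nth_num c i) (nth_num c j))
   \<and> (\<forall>i<c. (tl_num ^^ i) c \<noteq> 0 \<longrightarrow> Q (nth_num c i) t)"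
proof -
  let ?L = "list_decode c"
  have "antichain_below Q t ?L \<longleftrightarrow>
      (\<forall>i<length ?L. \<forall>j<length ?L. (i \<noteq> j \<longrightarrow> ?L ! i \<noteq> ?L ! j) \<and> \<not> Q (?L ! i) (?L ! j))
      \<and> (\<forall>i<length ?L. Q (?L ! i) t)"
    unfolding antichain_below_def distinct_conv_nth all_set_conv_all_nth by blast
  then show ?thesis
    by (simp add: less_length_list_decode_iff nth_list_decode) blast
qed

text \<open>The \<open>\<Pi>\<^sub>1\<close> matrix of the \<open>\<Sigma>\<^sub>2\<close> statement \<open>\<exists>t. maximal_of_width Q L t\<close>: the witness codes \<open>t\<close>
  together with an antichain of length \<open>L + 2\<close> below it, the counterexample candidate codes a
  point above \<open>t\<close> together with a list that might be an antichain of length \<open>L + 3\<close>.\<close>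

definition maximal_of_width_matrix :: "(nat \<Rightarrow> nat \<Rightarrow> bool) \<Rightarrow> nat \<Rightarrow> nat \<Rightarrow> nat \<Rightarrow> bool" where
  "maximal_of_width_matrix Q L x y \<longleftrightarrow> \<not> Q (fst (prod_decode x)) (fst (prod_decode y))
     \<and> antichain_below Q (fst (prod_decode x)) (list_decode (snd (prod_decode x)))
     \<and> length (list_decode (snd (prod_decode x))) = L + 2
     \<and> \<not> (antichain_below Q (fst (prod_decode x)) (list_decode (snd (prod_decode y)))
          \<and> length (list_decode (snd (prod_decode y))) = L + 3)"

lemma ex_maximal_of_width_iff_matrix:
  "(\<exists>t. maximal_of_width Q L t) \<longleftrightarrow> (\<exists>x. \<forall>y. maximal_of_width_matrix Q L x y)"
proof
  assume "\<exists>t. maximal_of_width Q L t"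
  then obtain t as where t: "\<forall>u. \<not> Q t u" "antichain_below Q t as" "length as = L + 2"
    "\<not> (\<exists>as. antichain_below Q t as \<and> length as = L + 3)"
    unfolding maximal_of_width_def by blast
  then have "\<forall>y. maximal_of_width_matrix Q L (prod_encode (t, list_encode as)) y"
    unfolding maximal_of_width_matrix_def by simp
  then show "\<exists>x. \<forall>y. maximal_of_width_matrix Q L x y" ..
next
  assume "\<exists>x. \<forall>y. maximal_of_width_matrix Q L x y"
  then obtain x where x: "\<forall>y. maximal_of_width_matrix Q L x y" by blast
  let ?t = "fst (prod_decode x)"
  have "\<not> Q ?t u" for u
    using x[rule_format, of "prod_encode (u, 0)"] unfolding maximal_of_width_matrix_def by simp
  moreover have "\<exists>as. antichain_below Q ?t as \<and> length as = L + 2"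
    using x[rule_format, of 0] unfolding maximal_of_width_matrix_def by blast
  moreover have "\<not> antichain_below Q ?t as \<or> length as \<noteq> L + 3" for as
    using x[rule_format, of "prod_encode (0, list_encode as)"] unfolding maximal_of_width_matrix_def by simp
  ultimately show "\<exists>t. maximal_of_width Q L t"
    unfolding maximal_of_width_def by blast
qed

lemma decidable_maximal_of_width_matrix:
  assumes Q: "decidable X (\<lambda>z. Q (fst (prod_decode z)) (snd (prod_decode z)))"
    and "computable X L" "computable X x" "computable X y"
  shows "decidable X (\<lambda>z. maximal_of_width_matrix Q (L z) (x z) (y z))"
  unfolding maximal_of_width_matrix_def antichain_below_list_decode_iff length_list_decode_eq_iff
  by (intro computable_derivation_intros decidable_app2[OF Q] assms computable_comp[OF assms(2)]
      computable_comp[OF assms(3)] computable_comp[OF assms(4)])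

definition delta2_bit :: "nat set \<Rightarrow> nat \<Rightarrow> bool" where
  "delta2_bit A c \<longleftrightarrow> (if even c then c div 2 \<notin> A else c div 2 \<in> A)"

abbreviation delta2_order :: "nat set \<Rightarrow> nat \<Rightarrow> nat \<Rightarrow> bool" where
  "delta2_order A \<equiv> coded_order (\<lambda>c s. delta2_bit A c)"

lemma computable_copy_if_reducible_to_jump:
  assumes "turing_reducible A (jump X)"
  shows "\<exists>Q. rel_computable_in X Q \<and> rel_isomorphic Q (delta2_order A)"
proof -
  from assms obtain p where p: "\<And>n. eval (jump X) p n (if n \<in> A then 1 else 0)"
    unfolding turing_reducible_def by blast
  define F where "F c s \<longleftrightarrow>
      (if even c then jump_approx X (code p) s (c div 2) \<noteq> 1 else jump_approx X (code p) s (c div 2) = 1)"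
    for c s
  have "\<exists>s0. \<forall>s\<ge>s0. F c s = delta2_bit A c" for c
  proof -
    obtain s0 where "\<forall>s\<ge>s0. jump_approx X (code p) s (c div 2) = (if c div 2 \<in> A then 1 else 0)"
      using limit_lemma[OF p] by blast
    then show ?thesis unfolding F_def delta2_bit_def by (intro exI[of _ s0]) auto
  qed
  then have "rel_isomorphic (coded_order F) (delta2_order A)"
    by (rule coded_order_iso_limit)
  moreover have "decidable X (\<lambda>z. F (fst (prod_decode z)) (snd (prod_decode z)))"
    unfolding F_def even_iff_mod_2_eq_zero
    by (intro computable_intros computable_app2[OF computable_jump_approx])
  then have "rel_computable_in X (coded_order F)"
    unfolding rel_computable_in_iff_decidable by (intro decidable_coded_order computable_intros)
  ultimately show ?thesis by blast
qed

lemma reducible_to_jump_if_computable_copy: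
  assumes "rel_computable_in X Q" and "rel_isomorphic Q (delta2_order A)"
  shows "turing_reducible A (jump X)"
proof -
  have Q: "decidable X (\<lambda>z. Q (fst (prod_decode z)) (snd (prod_decode z)))"
    using assms(1) unfolding rel_computable_in_iff_decidable .
  have width: "(\<exists>x. \<forall>y. maximal_of_width_matrix Q L x y) \<longleftrightarrow> \<not> delta2_bit A L" for L
    unfolding ex_maximal_of_width_iff_matrix[symmetric] ex_maximal_of_width_iso[OF assms(2)]
    by (rule ex_maximal_of_width_coded_order)
  show ?thesis
  proof (rule delta2_turing_reducible_jump)
    show "n \<in> A \<longleftrightarrow> (\<exists>x. \<forall>y. maximal_of_width_matrix Q (2 * fst (prod_decode (prod_encode (n, x))))
        (snd (prod_decode (prod_encode (n, x)))) y)" for n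
      using width[of "2 * n"] by (simp add: delta2_bit_def)
    show "n \<notin> A \<longleftrightarrow> (\<exists>x. \<forall>y. maximal_of_width_matrix Q (2 * fst (prod_decode (prod_encode (n, x))) + 1)
        (snd (prod_decode (prod_encode (n, x)))) y)" for n
      using width[of "2 * n + 1"] by (simp add: delta2_bit_def)
  qed (intro decidable_maximal_of_width_matrix[OF Q] computable_intros)+
qed

theorem theorem30:
  fixes A :: "nat set"
  shows "\<exists>R :: nat \<Rightarrow> nat \<Rightarrow> bool. irreflexive_rel R \<and> interpolable R \<and>
           (\<forall>X :: nat set. turing_reducible A (jump X) \<longleftrightarrow>
              (\<exists>Q. rel_computable_in X Q \<and> rel_isomorphic Q R))"
proof (intro exI conjI allI)
  show "irreflexive_rel (delta2_order A)" by (rule irreflexive_coded_order)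
  show "interpolable (delta2_order A)" by (rule interpolable_coded_order)
  show "turing_reducible A (jump X) \<longleftrightarrow> (\<exists>Q. rel_computable_in X Q \<and> rel_isomorphic Q (delta2_order A))" for X
    using computable_copy_if_reducible_to_jump reducible_to_jump_if_computable_copy by blast
qed

end
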